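(* Let $\rho=\sum_{i=1}^4 p_i|\psi_i\rangle\langle\psi_i|$ be a Bell decomposable state with $p_4>\tfrac12$. Then the separable part $\rho_s=\sum_i p_i'|\psi_i\rangle\langle\psi_i|$, $p_i'=\frac{p_i}{2(1-p_4)}$ ($i=1,2,3$), $p_4'=\tfrac12$, of the optimal Lewenstein–Sanpera decomposition of $\rho$ coincides with a separable state $\sigma$ minimizing the von Neumann relative entropy $S(\rho\|\sigma)=\mathrm{tr}\{\rho(\ln\rho-\ln\sigma)\}$ over all separable two-qubit states $\sigma$. *)

theory Defs
  imports Complex_Main "HOL-Library.Extended_Real" "Jordan_Normal_Form.Matrix"
begin

definition adj :: "complex mat \<Rightarrow> complex mat" where
  "adj A = mat (dim_col A) (dim_row A) (\<lambda>(i,j). cnj (A $$ (j,i)))"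

definition tr :: "complex mat \<Rightarrow> complex" where
  "tr A = (\<Sum>i<dim_row A. A $$ (i,i))"

definition hermitian :: "complex mat \<Rightarrow> bool" where
  "hermitian A \<longleftrightarrow> dim_row A = dim_col A \<and> adj A = A"

definition unitary :: "nat \<Rightarrow> complex mat \<Rightarrow> bool" where
  "unitary n U \<longleftrightarrow> U \<in> carrier_mat n n \<and> adj U * U = 1\<^sub>m n"

definition psd :: "nat \<Rightarrow> complex mat \<Rightarrow> bool" where
  "psd n A \<longleftrightarrow> A \<in> carrier_mat n n \<and> hermitian A \<and>
     (\<forall>v::nat \<Rightarrow> complex. 0 \<le> Re (\<Sum>i<n. \<Sum>j<n. cnj (v i) * A $$ (i,j) * v j))"

definition density :: "nat \<Rightarrow> complex mat \<Rightarrow> bool" where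
  "density n \<rho> \<longleftrightarrow> psd n \<rho> \<and> tr \<rho> = 1"

definition kron :: "complex mat \<Rightarrow> complex mat \<Rightarrow> complex mat" where
  "kron A B = mat (dim_row A * dim_row B) (dim_col A * dim_col B)
     (\<lambda>(i,j). A $$ (i div dim_row B, j div dim_col B) * B $$ (i mod dim_row B, j mod dim_col B))"

definition separable :: "complex mat \<Rightarrow> bool" where
  "separable \<sigma> \<longleftrightarrow> (\<exists>(k::nat) (q::nat \<Rightarrow> real) \<alpha> \<beta>.
     (\<forall>i<k. 0 \<le> q i \<and> density 2 (\<alpha> i) \<and> density 2 (\<beta> i)) \<and> (\<Sum>i<k. q i) = 1 \<and>
     \<sigma> = mat 4 4 (\<lambda>(a,b). \<Sum>i<k. complex_of_real (q i) * kron (\<alpha> i) (\<beta> i) $$ (a,b)))"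

definition mat_fun :: "(real \<Rightarrow> real) \<Rightarrow> complex mat \<Rightarrow> complex mat" where
  "mat_fun f A = (SOME B. \<exists>U (lam::nat \<Rightarrow> real). unitary (dim_row A) U \<and>
       A = U * mat_diag (dim_row A) (\<lambda>i. complex_of_real (lam i)) * adj U \<and>
       B = U * mat_diag (dim_row A) (\<lambda>i. complex_of_real (f (lam i))) * adj U)"

text \<open>Since ln 0 = 0 in
  Isabelle, the matrix logarithm acts as 0 on kernels, giving the usual 0 ln 0 = 0 convention.\<close>
definition rel_entropy :: "complex mat \<Rightarrow> complex mat \<Rightarrow> ereal" where
  "rel_entropy \<rho> \<sigma> =
     (if (\<forall>v \<in> carrier_vec (dim_col \<sigma>). \<sigma> *\<^sub>v v = 0\<^sub>v (dim_row \<sigma>) \<longrightarrow> \<rho> *\<^sub>v v = 0\<^sub>v (dim_row \<rho>))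
      then ereal (Re (tr (\<rho> * (mat_fun ln \<rho> - mat_fun ln \<sigma>))))
      else \<infinity>)"

text \<open>Bell states in the basis |00>,|01>,|10>,|11> (index 2a+b for |ab>):
  psi1 = (|00>+|11>)/sqrt2, psi2 = (|00>-|11>)/sqrt2, psi3 = (|01>+|10>)/sqrt2,
  psi4 = (|01>-|10>)/sqrt2.\<close>
definition bell :: "nat \<Rightarrow> nat \<Rightarrow> complex" where
  "bell k j = complex_of_real (1 / sqrt 2) *
     (if k = 1 then [1, 0, 0, 1] ! j
      else if k = 2 then [1, 0, 0, -1] ! j
      else if k = 3 then [0, 1, 1, 0] ! j
      else [0, 1, -1, 0] ! j)"

definition proj :: "(nat \<Rightarrow> complex) \<Rightarrow> complex mat" where
  "proj \<psi> = mat 4 4 (\<lambda>(i,j). \<psi> i * cnj (\<psi> j))"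

definition bell_diag :: "(nat \<Rightarrow> real) \<Rightarrow> complex mat" where
  "bell_diag p = mat 4 4 (\<lambda>(a,b). \<Sum>i\<in>{1..4}. complex_of_real (p i) * proj (bell i) $$ (a,b))"

end

theory Submission
  imports Defs "Jordan_Normal_Form.Spectral_Radius"
begin

text \<open>For a separable sigma put q_i = <psi_i|sigma|psi_i>. Every product state, hence every
  separable state, has singlet weight q_4 \<le> 1/2. The tangent-line bound
  ln y \<le> ln r + y / r - 1, applied in an eigenbasis of sigma, gives
  <psi_i| ln sigma |psi_i> \<le> ln p_i' + q_i / p_i' - 1, so that
  tr (rho ln sigma) \<le> sum_i p_i ln p_i' + sum_i p_i q_i / p_i' - 1, and the last sum is at
  most 1 because q_4 \<le> 1/2 < p_4. As rho and rho_s are both diagonal in the Bell basis,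
  tr (rho ln rho_s) = sum_i p_i ln p_i', hence S(rho || rho_s) \<le> S(rho || sigma).
  Separability of rho_s is witnessed by a mixture of products of opposite Pauli eigenstates.
  The matrix logarithm is defined through a spectral decomposition, whose existence for
  Hermitian matrices follows by Householder deflation.\<close>

section \<open>Spectral theorem for Hermitian matrices\<close>

lemma index_mult_mat_sum:
  assumes "A \<in> carrier_mat n m" and "B \<in> carrier_mat m k" and "i < n" "j < k"
  shows "(A * B) $$ (i,j) = (\<Sum>l<m. A $$ (i,l) * B $$ (l,j))"
  using assms by (auto simp: scalar_prod_def lessThan_atLeast0 intro!: sum.cong)

lemma index_mult_mat_vec_sum:
  assumes "A \<in> carrier_mat n m" and "v \<in> carrier_vec m" and "i < n"
  shows "(A *\<^sub>v v) $ i = (\<Sum>l<m. A $$ (i,l) * v $ l)"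
  using assms by (auto simp: scalar_prod_def lessThan_atLeast0 intro!: sum.cong)

lemma mult_carrier_mat_square [simp]:
  "A \<in> carrier_mat n n \<Longrightarrow> B \<in> carrier_mat n n \<Longrightarrow> A * B \<in> carrier_mat n n"
  by (rule mult_carrier_mat)

lemma adj_carrier [simp]: "A \<in> carrier_mat n m \<Longrightarrow> adj A \<in> carrier_mat m n"
  by (auto simp: adj_def)

lemma adj_dims [simp]: "dim_row (adj A) = dim_col A" "dim_col (adj A) = dim_row A"
  by (auto simp: adj_def)

lemma adj_index [simp]: "i < dim_col A \<Longrightarrow> j < dim_row A \<Longrightarrow> adj A $$ (i,j) = cnj (A $$ (j,i))"
  by (auto simp: adj_def)

lemma adj_mult:
  assumes A: "A \<in> carrier_mat n m" and B: "B \<in> carrier_mat m k"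
  shows "adj (A * B) = adj B * adj A"
proof (rule eq_matI)
  fix i j assume "i < dim_row (adj B * adj A)" and "j < dim_col (adj B * adj A)"
  hence i: "i < k" and j: "j < n" using A B by auto
  have "adj (A * B) $$ (i,j) = (\<Sum>l<m. cnj (A $$ (j,l)) * cnj (B $$ (l,i)))"
    using A B i j index_mult_mat_sum[OF A B j i] by simp
  also have "\<dots> = (adj B * adj A) $$ (i,j)"
    using A B i j by (simp add: index_mult_mat_sum[OF adj_carrier[OF B] adj_carrier[OF A] i j]
        mult.commute del: index_mult_mat)
  finally show "adj (A * B) $$ (i,j) = (adj B * adj A) $$ (i,j)" .
qed (use A B in auto)

lemma adj_adj [simp]: "adj (adj A) = A"
  by (rule eq_matI) (auto simp: adj_def)

lemma hermitian_entry:
  assumes "B \<in> carrier_mat n n" and "adj B = B" and "i < n" "j < n"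
  shows "B $$ (i,j) = cnj (B $$ (j,i))"
  using assms adj_index[of i B j] by auto

lemma unitary_carrier: "unitary n U \<Longrightarrow> U \<in> carrier_mat n n"
  unfolding unitary_def by auto

lemma unitary_mult_adj:
  assumes "unitary n U" shows "U * adj U = 1\<^sub>m n"
  using assms mat_mult_left_right_inverse[of "adj U" n U] unfolding unitary_def by auto

lemma unitary_mult:
  assumes U: "unitary n U" and V: "unitary n V" shows "unitary n (U * V)"
proof -
  have Uc: "U \<in> carrier_mat n n" and UU: "adj U * U = 1\<^sub>m n" using U unfolding unitary_def by auto
  have Vc: "V \<in> carrier_mat n n" and VV: "adj V * V = 1\<^sub>m n" using V unfolding unitary_def by auto
  have "adj (U * V) * (U * V) = adj V * ((adj U * U) * V)"
    using Uc Vc by (simp add: adj_mult[OF Uc Vc] assoc_mult_mat[of _ n n _ n _ n])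
  also have "\<dots> = 1\<^sub>m n" using UU VV Vc by simp
  finally show ?thesis using Uc Vc unfolding unitary_def by auto
qed

lemma unitary_conj_hermitian:
  assumes "unitary n U" and "A \<in> carrier_mat n n" and "adj A = A"
  shows "adj (adj U * A * U) = adj U * A * U"
  using assms unitary_carrier[OF assms(1)]
  by (simp add: adj_mult[of _ n n _ n] assoc_mult_mat[of _ n n _ n _ n])

lemma mult_unit_vec:
  assumes "(A :: complex mat) \<in> carrier_mat n m" and "j < m"
  shows "A *\<^sub>v unit_vec m j = col A j"
  by (rule eq_vecI) (use assms in auto)

definition diag_cols_upto :: "nat \<Rightarrow> nat \<Rightarrow> complex mat \<Rightarrow> bool" where
  "diag_cols_upto n k B \<longleftrightarrow> (\<forall>i<n. \<forall>j<k. i \<noteq> j \<longrightarrow> B $$ (i,j) = 0)"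

lemma eigenvector_vanishing_upto:
  assumes B: "B \<in> carrier_mat n n" and h: "adj B = B" and od: "diag_cols_upto n k B" and k: "k < n"
  shows "\<exists>v e. v \<in> carrier_vec n \<and> v \<noteq> 0\<^sub>v n \<and> (\<forall>i<k. v $ i = 0) \<and> B *\<^sub>v v = e \<cdot>\<^sub>v v"
proof -
  define C where "C = mat (n-k) (n-k) (\<lambda>(i,j). B $$ (i+k, j+k))"
  have C: "C \<in> carrier_mat (n-k) (n-k)" by (simp add: C_def)
  from spectrum_non_empty[OF C] k obtain e where "eigenvalue C e" unfolding spectrum_def by auto
  then obtain w where w: "w \<in> carrier_vec (n-k)" "w \<noteq> 0\<^sub>v (n-k)" "C *\<^sub>v w = e \<cdot>\<^sub>v w"
    unfolding eigenvalue_def eigenvector_def using C by auto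
  define v where "v = vec n (\<lambda>i. if i < k then 0 else w $ (i-k))"
  have v: "v \<in> carrier_vec n" by (simp add: v_def)
  have vnz: "v \<noteq> 0\<^sub>v n"
  proof
    assume v0: "v = 0\<^sub>v n"
    have "w = 0\<^sub>v (n-k)"
    proof (rule eq_vecI)
      fix i assume "i < dim_vec (0\<^sub>v (n - k) :: complex vec)"
      hence i: "i < n - k" by simp
      have "v $ (i+k) = 0" using v0 i by simp
      thus "w $ i = 0\<^sub>v (n - k) $ i" using i by (simp add: v_def)
    qed (use w in auto)
    with w show False by simp
  qed
  have Bv: "B *\<^sub>v v = e \<cdot>\<^sub>v v"
  proof (rule eq_vecI)
    fix i assume "i < dim_vec (e \<cdot>\<^sub>v v)"
    hence i: "i < n" by (simp add: v_def)
    have split: "{..<n} = {..<k} \<union> {k..<n}" using k by auto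
    have "(B *\<^sub>v v) $ i = (\<Sum>j\<in>{k..<n}. B $$ (i,j) * v $ j)"
    proof -
      have "(\<Sum>j<k. B $$ (i,j) * v $ j) = 0" using k by (auto intro!: sum.neutral simp: v_def)
      thus ?thesis unfolding index_mult_mat_vec_sum[OF B v i] split by (subst sum.union_disjoint) auto
    qed
    also have "\<dots> = (\<Sum>j\<in>{k..<n}. B $$ (i,j) * w $ (j-k))"
      by (rule sum.cong) (auto simp: v_def)
    also have "\<dots> = (e \<cdot>\<^sub>v v) $ i"
    proof (cases "i < k")
      case True
      have "B $$ (i,j) = 0" if "j \<in> {k..<n}" for j
        using hermitian_entry[OF B h i, of j] od that True unfolding diag_cols_upto_def by auto
      thus ?thesis using True i by (simp add: v_def)
    next
      case False
      have img: "{k..<n} = (\<lambda>j. j + k) ` {..<n-k}"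
        using k by (simp add: lessThan_atLeast0 image_add_atLeastLessThan)
      have "(\<Sum>j\<in>{k..<n}. B $$ (i,j) * w $ (j-k)) = (\<Sum>j<n-k. B $$ (i,j+k) * w $ j)"
        unfolding img by (subst sum.reindex) (auto simp: inj_on_def)
      also have "\<dots> = (C *\<^sub>v w) $ (i-k)"
        using index_mult_mat_vec_sum[OF C w(1), of "i-k"] False i by (simp add: C_def)
      also have "\<dots> = e * w $ (i-k)" using w(3) w(1) False i by simp
      finally show ?thesis using False i by (simp add: v_def)
    qed
    finally show "(B *\<^sub>v v) $ i = (e \<cdot>\<^sub>v v) $ i" .
  qed (use B in \<open>auto simp: v_def\<close>)
  show ?thesis using v vnz Bv k by (intro exI[of _ v] exI[of _ e]) (auto simp: v_def)
qed

definition householder :: "nat \<Rightarrow> real \<Rightarrow> (nat \<Rightarrow> complex) \<Rightarrow> complex mat" where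
  "householder n c w = mat n n (\<lambda>(i,j). (if i = j then 1 else 0) - complex_of_real c * w i * cnj (w j))"

lemma householder_carrier [simp]: "householder n c w \<in> carrier_mat n n"
  by (simp add: householder_def)

lemma adj_householder: "adj (householder n c w) = householder n c w"
  by (rule eq_matI) (auto simp: householder_def adj_def)

lemma householder_involution:
  assumes c: "complex_of_real c * complex_of_real c * (\<Sum>l<n. cnj (w l) * w l) = 2 * complex_of_real c"
  shows "householder n c w * householder n c w = 1\<^sub>m n"
proof (rule eq_matI)
  let ?H = "householder n c w"
  fix i j assume "i < dim_row (1\<^sub>m n :: complex mat)" "j < dim_col (1\<^sub>m n :: complex mat)"
  hence i: "i < n" and j: "j < n" by auto
  let ?d = "\<lambda>i j. (if i = j then 1 else 0) :: complex"
  let ?c = "complex_of_real c"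
  have "(?H * ?H) $$ (i,j) = (\<Sum>l<n. (?d i l - ?c * w i * cnj (w l)) * (?d l j - ?c * w l * cnj (w j)))"
    using index_mult_mat_sum[OF householder_carrier householder_carrier i j] i j
    by (simp add: householder_def del: index_mult_mat)
  also have "\<dots> = (\<Sum>l<n. (if l = i then ?d i j else 0) - (if l = j then ?c * w i * cnj (w l) else 0)
       - (if l = i then ?c * w l * cnj (w j) else 0)
       + (?c * ?c * w i * cnj (w j)) * (cnj (w l) * w l))"
    by (intro sum.cong refl) (auto simp: ring_distribs)
  also have "\<dots> = ?d i j - 2 * (?c * w i * cnj (w j))
       + (?c * ?c * (\<Sum>l<n. cnj (w l) * w l)) * (w i * cnj (w j))"
    using i j by (simp add: sum.distrib sum_subtractf sum_distrib_left mult_ac)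
  also have "\<dots> = ?d i j" unfolding c by simp
  finally show "(?H * ?H) $$ (i,j) = 1\<^sub>m n $$ (i,j)" using i j by simp
qed (auto simp: householder_def)

lemma householder_reflection_exists:
  assumes y: "y \<in> carrier_vec n" and k: "k < n" and y0: "\<forall>i<k. y $ i = 0"
    and yk: "y $ k = complex_of_real r" and yn: "(\<Sum>i<n. (cmod (y $ i))\<^sup>2) = 1"
  shows "\<exists>H. H \<in> carrier_mat n n \<and> adj H = H \<and> H * H = 1\<^sub>m n \<and> col H k = y \<and>
     (\<forall>j<k. col H j = unit_vec n j)"
proof -
  define w where "w = (\<lambda>i. (if i = k then 1 else 0) - y $ i)"
  define c :: real where "c = (if r = 1 then 0 else 1 / (1 - r))"
  define H where "H = householder n c w"
  have norm_w: "(\<Sum>l<n. cnj (w l) * w l) = complex_of_real (2 - 2 * r)"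
  proof -
    have "(\<Sum>l<n. cnj (w l) * w l) = (\<Sum>l<n. (if l = k then 1 - cnj (y $ l) - y $ l else 0)
        + y $ l * cnj (y $ l))"
      by (rule sum.cong) (auto simp: w_def algebra_simps)
    also have "\<dots> = (\<Sum>l<n. (if l = k then 1 - cnj (y $ l) - y $ l else 0)
        + complex_of_real ((cmod (y $ l))\<^sup>2))"
      by (simp only: complex_norm_square)
    also have "\<dots> = complex_of_real (2 - 2 * r)"
      using k yk yn by (simp add: sum.distrib del: of_real_power flip: of_real_sum)
    finally show ?thesis .
  qed
  have c: "c * c * (2 - 2 * r) = 2 * c"
  proof (cases "r = 1")
    case False
    hence "c * (1 - r) = 1" by (simp add: c_def)
    thus ?thesis by (metis mult.assoc mult.commute mult_2_right mult_1 right_diff_distrib')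
  qed (simp add: c_def)
  have HH: "H * H = 1\<^sub>m n"
    unfolding H_def using arg_cong[OF c, of complex_of_real]
    by (intro householder_involution) (simp add: norm_w)
  have colk: "col H k = y"
  proof (rule eq_vecI)
    fix i assume "i < dim_vec y" hence i: "i < n" using y by simp
    show "col H k $ i = y $ i"
    proof (cases "r = 1")
      case True
      \<comment> \<open>then y is the unit vector e_k, and H = I\<close>
      have "(\<Sum>l\<in>{..<n}-{k}. (cmod (y $ l))\<^sup>2) = 0"
        using yn yk True k by (simp add: sum_diff1)
      hence "\<forall>l\<in>{..<n}-{k}. (cmod (y $ l))\<^sup>2 = 0"
        by (subst sum_nonneg_eq_0_iff[symmetric]) auto
      hence "y $ i = (if i = k then 1 else 0)" using i yk True by auto
      thus ?thesis using True i k by (simp add: H_def householder_def c_def)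
    next
      case False
      have "c * (1 - r) = 1" using False by (simp add: c_def)
      hence "complex_of_real (c * (1 - r)) = 1" by simp
      hence "complex_of_real c * cnj (w k) = 1" using yk by (simp add: w_def)
      hence "complex_of_real c * w i * cnj (w k) = w i" by (simp add: mult.commute mult.left_commute)
      hence "col H k $ i = (if i = k then 1 else 0) - w i" using i k by (simp add: H_def householder_def)
      thus ?thesis by (simp add: w_def)
    qed
  qed (use y in \<open>auto simp: H_def householder_def\<close>)
  have "col H j = unit_vec n j" if j: "j < k" for j
    using j y0 k by (intro eq_vecI) (auto simp: H_def householder_def w_def)
  thus ?thesis using HH colk adj_householder[of n c w] householder_carrier[of n c w]
    unfolding H_def by blast
qed

lemma unit_vector_with_real_entry:
  assumes v: "v \<in> carrier_vec n" and vnz: "v \<noteq> 0\<^sub>v n" and k: "k < n"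
  shows "\<exists>a r. (a \<cdot>\<^sub>v v) $ k = complex_of_real r \<and> (\<Sum>i<n. (cmod ((a \<cdot>\<^sub>v v) $ i))\<^sup>2) = 1"
proof -
  define N where "N = (\<Sum>i<n. (cmod (v $ i))\<^sup>2)"
  obtain i0 where i0: "i0 < n" "v $ i0 \<noteq> 0"
    using vnz v by (metis eq_vecI carrier_vecD index_zero_vec(1) index_zero_vec(2))
  have "0 < (cmod (v $ i0))\<^sup>2" using i0 by simp
  also have "\<dots> \<le> N" unfolding N_def using i0 by (intro member_le_sum) auto
  finally have N: "N > 0" .
  define ph where "ph = (if v $ k = 0 then 1 else cnj (v $ k) / complex_of_real (cmod (v $ k)))"
  have ph1: "cmod ph = 1" by (auto simp: ph_def norm_divide)
  define a where "a = ph / complex_of_real (sqrt N)"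
  have ca: "cmod a = 1 / sqrt N" using N by (simp add: a_def norm_divide ph1)
  have "(a \<cdot>\<^sub>v v) $ k = complex_of_real (cmod (v $ k) / sqrt N)"
  proof (cases "v $ k = 0")
    case True thus ?thesis using v k by (simp add: a_def ph_def)
  next
    case False
    have "cnj (v $ k) * v $ k = complex_of_real ((cmod (v $ k))\<^sup>2)"
      by (subst mult.commute) (rule complex_norm_square[symmetric])
    thus ?thesis using v k False
      by (simp add: a_def ph_def field_simps power2_eq_square)
  qed
  moreover have "(\<Sum>i<n. (cmod ((a \<cdot>\<^sub>v v) $ i))\<^sup>2) = (\<Sum>i<n. (cmod (v $ i))\<^sup>2 / N)"
    using v N by (intro sum.cong) (auto simp: norm_mult ca power_mult_distrib power_divide)
  hence "(\<Sum>i<n. (cmod ((a \<cdot>\<^sub>v v) $ i))\<^sup>2) = 1"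
    using N by (simp add: sum_divide_distrib[symmetric] N_def[symmetric])
  ultimately show ?thesis by blast
qed

text \<open>A Householder reflection mapping e_k to a unit eigenvector supported on the indices
  k, ..., n-1 diagonalises column k and keeps the first k columns diagonal.\<close>

lemma diag_cols_upto_step:
  assumes B: "B \<in> carrier_mat n n" and h: "adj B = B" and od: "diag_cols_upto n k B" and k: "k < n"
  shows "\<exists>H. unitary n H \<and> diag_cols_upto n (Suc k) (adj H * B * H)"
proof -
  obtain v e where v: "v \<in> carrier_vec n" "v \<noteq> 0\<^sub>v n" "\<forall>i<k. v $ i = 0" "B *\<^sub>v v = e \<cdot>\<^sub>v v"
    using eigenvector_vanishing_upto[OF B h od k] by blast
  obtain a r where ar: "(a \<cdot>\<^sub>v v) $ k = complex_of_real r" "(\<Sum>i<n. (cmod ((a \<cdot>\<^sub>v v) $ i))\<^sup>2) = 1"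
    using unit_vector_with_real_entry[OF v(1) v(2) k] by blast
  define y where "y = a \<cdot>\<^sub>v v"
  have y: "y \<in> carrier_vec n" using v by (simp add: y_def)
  have y0: "\<forall>i<k. y $ i = 0" using v k by (simp add: y_def)
  have By: "B *\<^sub>v y = e \<cdot>\<^sub>v y"
    unfolding y_def using B v by (simp add: mult_mat_vec smult_smult_assoc mult.commute)
  obtain H where H: "H \<in> carrier_mat n n" "adj H = H" "H * H = 1\<^sub>m n" "col H k = y"
     "\<forall>j<k. col H j = unit_vec n j"
    using householder_reflection_exists[OF y k y0 ar[folded y_def]] by blast
  have U: "unitary n H" using H unfolding unitary_def by simp
  have "(H * B * H) $$ (i,j) = 0" if i: "i < n" and j: "j < Suc k" and ij: "i \<noteq> j" for i j
  proof -
    have jn: "j < n" using j k by simp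
    have eq: "(H * B * H) $$ (i,j) = (H *\<^sub>v (B *\<^sub>v col H j)) $ i"
      using i jn H(1) B by simp
    show ?thesis
    proof (cases "j < k")
      case True
      have "B *\<^sub>v col H j = B $$ (j,j) \<cdot>\<^sub>v unit_vec n j"
      proof (rule eq_vecI)
        fix l assume "l < dim_vec (B $$ (j,j) \<cdot>\<^sub>v unit_vec n j)" hence l: "l < n" by simp
        have "(B *\<^sub>v col H j) $ l = B $$ (l,j)"
          using H(5) True B l jn mult_unit_vec[OF B jn] by simp
        thus "(B *\<^sub>v col H j) $ l = (B $$ (j,j) \<cdot>\<^sub>v unit_vec n j) $ l"
          using od True l jn unfolding diag_cols_upto_def by auto
      qed (use B H in auto)
      hence "H *\<^sub>v (B *\<^sub>v col H j) = B $$ (j,j) \<cdot>\<^sub>v unit_vec n j"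
        using H(1) H(5) True jn by (simp add: mult_mat_vec mult_unit_vec)
      thus ?thesis using eq i ij jn by simp
    next
      case False
      hence jk: "j = k" using j by simp
      have "y = H *\<^sub>v unit_vec n k" using mult_unit_vec[OF H(1) k] H(4) by simp
      hence "H *\<^sub>v y = (H * H) *\<^sub>v unit_vec n k" using H(1) by simp
      hence "H *\<^sub>v y = unit_vec n k" using H(3) by simp
      hence "H *\<^sub>v (B *\<^sub>v col H j) = e \<cdot>\<^sub>v unit_vec n k"
        using H(1) H(4) By jk y by (simp add: mult_mat_vec)
      thus ?thesis using eq i ij jk k by simp
    qed
  qed
  thus ?thesis using U H unfolding diag_cols_upto_def by auto
qed

lemma diag_cols_upto_unitary:
  assumes A: "A \<in> carrier_mat n n" and h: "adj A = A" and "k \<le> n"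
  shows "\<exists>U. unitary n U \<and> diag_cols_upto n k (adj U * A * U)"
  using \<open>k \<le> n\<close>
proof (induction k)
  case 0
  have "unitary n (1\<^sub>m n)" unfolding unitary_def by auto
  thus ?case by (auto simp: diag_cols_upto_def)
next
  case (Suc k)
  then obtain U where U: "unitary n U" "diag_cols_upto n k (adj U * A * U)" by auto
  have Uc: "U \<in> carrier_mat n n" using unitary_carrier[OF U(1)] .
  have Bc: "adj U * A * U \<in> carrier_mat n n" using Uc A by (meson adj_carrier mult_carrier_mat)
  obtain H where H: "unitary n H" "diag_cols_upto n (Suc k) (adj H * (adj U * A * U) * H)"
    using diag_cols_upto_step[OF Bc unitary_conj_hermitian[OF U(1) A h] U(2)] Suc by auto
  have Hc: "H \<in> carrier_mat n n" using unitary_carrier[OF H(1)] .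
  have "adj (U * H) * A * (U * H) = adj H * (adj U * A * U) * H"
    using Uc Hc A by (simp add: adj_mult[of _ n n _ n] assoc_mult_mat[of _ n n _ n _ n])
  thus ?case using H unitary_mult[OF U(1) H(1)] by metis
qed

theorem hermitian_spectral_decomposition:
  assumes "hermitian A"
  shows "\<exists>U lam. unitary (dim_row A) U \<and>
     A = U * mat_diag (dim_row A) (\<lambda>i. complex_of_real (lam i)) * adj U"
proof -
  define n where "n = dim_row A"
  have A: "A \<in> carrier_mat n n" and h: "adj A = A"
    using assms unfolding hermitian_def n_def by auto
  obtain U where U: "unitary n U" "diag_cols_upto n n (adj U * A * U)"
    using diag_cols_upto_unitary[OF A h] by auto
  have Uc: "U \<in> carrier_mat n n" using unitary_carrier[OF U(1)] .
  define B where "B = adj U * A * U"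
  have Bc: "B \<in> carrier_mat n n" using Uc A unfolding B_def by (meson adj_carrier mult_carrier_mat)
  have hB: "adj B = B" unfolding B_def by (rule unitary_conj_hermitian[OF U(1) A h])
  define lam where "lam = (\<lambda>i. Re (B $$ (i,i)))"
  have real: "B $$ (i,i) = complex_of_real (lam i)" if "i < n" for i
  proof -
    have "B $$ (i,i) \<in> \<real>" using hermitian_entry[OF Bc hB that that] Reals_cnj_iff by metis
    thus ?thesis unfolding lam_def by (metis Reals_cases Re_complex_of_real)
  qed
  have BD: "B = mat_diag n (\<lambda>i. complex_of_real (lam i))"
    by (rule eq_matI) (use Bc U(2) real in \<open>auto simp: mat_diag_def diag_cols_upto_def B_def\<close>)
  have "U * B * adj U = (U * adj U) * A * (U * adj U)"
    unfolding B_def using Uc A by (simp add: assoc_mult_mat[of _ n n _ n _ n])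
  also have "\<dots> = A" using unitary_mult_adj[OF U(1)] A by simp
  finally show ?thesis using U(1) BD unfolding n_def by metis
qed

lemma mat_fun_spectral:
  assumes "hermitian A"
  shows "\<exists>U lam. unitary (dim_row A) U \<and>
     A = U * mat_diag (dim_row A) (\<lambda>i. complex_of_real (lam i)) * adj U \<and>
     mat_fun f A = U * mat_diag (dim_row A) (\<lambda>i. complex_of_real (f (lam i))) * adj U"
proof -
  have "\<exists>B U (lam::nat \<Rightarrow> real). unitary (dim_row A) U \<and>
       A = U * mat_diag (dim_row A) (\<lambda>i. complex_of_real (lam i)) * adj U \<and>
       B = U * mat_diag (dim_row A) (\<lambda>i. complex_of_real (f (lam i))) * adj U"
    using hermitian_spectral_decomposition[OF assms] by blast
  from someI_ex[OF this] show ?thesis unfolding mat_fun_def by blast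
qed

lemma mat_fun_carrier:
  assumes "hermitian A" shows "mat_fun f A \<in> carrier_mat (dim_row A) (dim_row A)"
  using mat_fun_spectral[OF assms, of f] unitary_carrier
  by (metis adj_carrier mat_diag_dim mult_carrier_mat)

section \<open>Quadratic forms of matrix functions\<close>

lemma adj_mult_vec_carrier [simp]:
  "U \<in> carrier_mat n m \<Longrightarrow> x \<in> carrier_vec n \<Longrightarrow> adj U *\<^sub>v x \<in> carrier_vec m"
  by (meson adj_carrier mult_mat_vec_carrier)

lemma mat_diag_mult_vec_carrier [simp]: "w \<in> carrier_vec n \<Longrightarrow> mat_diag n g *\<^sub>v w \<in> carrier_vec n"
  by (meson mat_diag_dim mult_mat_vec_carrier)

lemma mat_diag_dims [simp]: "dim_row (mat_diag n f) = n" "dim_col (mat_diag n f) = n"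
  by (auto simp: mat_diag_def)

definition cinner :: "nat \<Rightarrow> complex vec \<Rightarrow> complex vec \<Rightarrow> complex" where
  "cinner n x y = (\<Sum>a<n. cnj (x $ a) * y $ a)"

lemma cnj_mult_self: "cnj z * z = complex_of_real ((cmod z)\<^sup>2)"
  by (metis complex_norm_square mult.commute)

lemma cinner_smult_right: "y \<in> carrier_vec n \<Longrightarrow> cinner n x (c \<cdot>\<^sub>v y) = c * cinner n x y"
  unfolding cinner_def by (simp add: sum_distrib_left mult_ac)

lemma cinner_adj:
  assumes A: "A \<in> carrier_mat n m" and x: "x \<in> carrier_vec n" and z: "z \<in> carrier_vec m"
  shows "cinner n x (A *\<^sub>v z) = cinner m (adj A *\<^sub>v x) z"
proof -
  have "cinner n x (A *\<^sub>v z) = (\<Sum>a<n. \<Sum>b<m. cnj (x $ a) * (A $$ (a,b) * z $ b))"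
    unfolding cinner_def
    by (rule sum.cong[OF refl]) (use A z in \<open>simp add: index_mult_mat_vec_sum[OF A z] sum_distrib_left del: index_mult_mat_vec\<close>)
  also have "\<dots> = (\<Sum>b<m. \<Sum>a<n. cnj (x $ a) * (A $$ (a,b) * z $ b))"
    by (rule sum.swap)
  also have "\<dots> = cinner m (adj A *\<^sub>v x) z"
    unfolding cinner_def
  proof (rule sum.cong[OF refl])
    fix b assume b: "b \<in> {..<m}"
    have "(adj A *\<^sub>v x) $ b = (\<Sum>a<n. cnj (A $$ (a,b)) * x $ a)"
      using index_mult_mat_vec_sum[OF adj_carrier[OF A] x, of b] b A by simp
    thus "(\<Sum>a<n. cnj (x $ a) * (A $$ (a,b) * z $ b)) = cnj ((adj A *\<^sub>v x) $ b) * z $ b"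
      by (simp add: sum_distrib_left sum_distrib_right mult_ac)
  qed
  finally show ?thesis .
qed

lemma cinner_adj_unitary:
  assumes U: "unitary n U" and x: "x \<in> carrier_vec n"
  shows "cinner n (adj U *\<^sub>v x) (adj U *\<^sub>v x) = cinner n x x"
proof -
  have Uc: "U \<in> carrier_mat n n" using unitary_carrier[OF U] .
  have "cinner n (adj U *\<^sub>v x) (adj U *\<^sub>v x) = cinner n x (U *\<^sub>v (adj U *\<^sub>v x))"
    using cinner_adj[OF Uc x, of "adj U *\<^sub>v x"] Uc x by simp
  also have "U *\<^sub>v (adj U *\<^sub>v x) = (U * adj U) *\<^sub>v x"
    using Uc x by (simp add: assoc_mult_mat_vec[of _ n n _ n])
  also have "\<dots> = x" using unitary_mult_adj[OF U] x by simp
  finally show ?thesis .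
qed

lemma adj_mult_vec_index:
  assumes "U \<in> carrier_mat n n" and "x \<in> carrier_vec n" and "j < n"
  shows "(adj U *\<^sub>v x) $ j = cnj (cinner n x (col U j))"
  using assms index_mult_mat_vec_sum[OF adj_carrier[OF assms(1)] assms(2,3)]
  by (simp add: cinner_def mult.commute del: index_mult_mat_vec)

lemma mat_diag_mult_vec_index:
  assumes w: "w \<in> carrier_vec n" and j: "j < n"
  shows "(mat_diag n g *\<^sub>v w) $ j = g j * w $ j"
proof -
  have "(mat_diag n g *\<^sub>v w) $ j = (\<Sum>l<n. mat_diag n g $$ (j,l) * w $ l)"
    using index_mult_mat_vec_sum[OF mat_diag_dim w j] .
  also have "\<dots> = (\<Sum>l<n. if l = j then g j * w $ j else 0)"
    by (rule sum.cong[OF refl]) (use j in \<open>auto simp: mat_diag_def\<close>)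
  finally show ?thesis using j by simp
qed

lemma cinner_spectral:
  assumes U: "U \<in> carrier_mat n n" and x: "x \<in> carrier_vec n"
  shows "cinner n x ((U * mat_diag n g * adj U) *\<^sub>v x) =
    (\<Sum>j<n. g j * (cnj ((adj U *\<^sub>v x) $ j) * (adj U *\<^sub>v x) $ j))"
proof -
  define w where "w = adj U *\<^sub>v x"
  have w: "w \<in> carrier_vec n" using U x by (simp add: w_def)
  have "(U * mat_diag n g * adj U) *\<^sub>v x = U *\<^sub>v (mat_diag n g *\<^sub>v w)"
    using U x by (simp add: w_def assoc_mult_mat_vec[of _ n n _ n])
  hence "cinner n x ((U * mat_diag n g * adj U) *\<^sub>v x) = cinner n w (mat_diag n g *\<^sub>v w)"
    using cinner_adj[OF U x, of "mat_diag n g *\<^sub>v w"] w by (simp add: w_def)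
  also have "\<dots> = (\<Sum>j<n. g j * (cnj (w $ j) * w $ j))"
    unfolding cinner_def using mat_diag_mult_vec_index[OF w] by (intro sum.cong) auto
  finally show ?thesis unfolding w_def .
qed

lemma cinner_spectral_eigenvector:
  assumes U: "unitary n U" and S: "S = U * mat_diag n (\<lambda>i. complex_of_real (lam i)) * adj U"
    and x: "x \<in> carrier_vec n" and ev: "S *\<^sub>v x = complex_of_real mu \<cdot>\<^sub>v x" and nx: "cinner n x x = 1"
  shows "cinner n x ((U * mat_diag n (\<lambda>i. complex_of_real (f (lam i))) * adj U) *\<^sub>v x) = complex_of_real (f mu)"
proof -
  have Uc: "U \<in> carrier_mat n n" using unitary_carrier[OF U] .
  have UU: "adj U * U = 1\<^sub>m n" using U unfolding unitary_def by auto
  define w where "w = adj U *\<^sub>v x"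
  have w: "w \<in> carrier_vec n" using Uc x by (simp add: w_def)
  let ?D = "mat_diag n (\<lambda>i. complex_of_real (lam i))"
  have "adj U * S = (adj U * U) * ?D * adj U"
    using Uc by (simp add: S assoc_mult_mat[of _ n n _ n _ n])
  hence US: "adj U * S = ?D * adj U" using UU Uc by simp
  have Sc: "S \<in> carrier_mat n n" using Uc S by simp
  have "adj U *\<^sub>v (S *\<^sub>v x) = (adj U * S) *\<^sub>v x"
    using Uc Sc x by (simp add: assoc_mult_mat_vec[of _ n n _ n])
  also have "\<dots> = ?D *\<^sub>v w" unfolding US w_def by (rule assoc_mult_mat_vec) (use Uc x in auto)
  finally have eq: "complex_of_real mu \<cdot>\<^sub>v w = ?D *\<^sub>v w"
    using ev Uc x mult_mat_vec[OF adj_carrier[OF Uc] x] by (simp add: w_def)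
  have "w $ j = 0 \<or> lam j = mu" if j: "j < n" for j
    using arg_cong[OF eq, of "\<lambda>v. v $ j"] mat_diag_mult_vec_index[OF w j] w j by auto
  hence "(\<Sum>j<n. complex_of_real (f (lam j)) * (cnj (w $ j) * w $ j)) =
      (\<Sum>j<n. complex_of_real (f mu) * (cnj (w $ j) * w $ j))"
    by (intro sum.cong) auto
  also have "\<dots> = complex_of_real (f mu) * cinner n w w"
    by (simp add: cinner_def sum_distrib_left)
  also have "cinner n w w = 1" using cinner_adj_unitary[OF U x] nx by (simp add: w_def)
  finally show ?thesis using cinner_spectral[OF Uc x] unfolding w_def by simp
qed

lemma spectral_col_eigenvector:
  assumes U: "unitary n U" and S: "S = U * mat_diag n (\<lambda>i. complex_of_real (lam i)) * adj U" and j: "j < n"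
  shows "S *\<^sub>v col U j = complex_of_real (lam j) \<cdot>\<^sub>v col U j"
proof -
  have Uc: "U \<in> carrier_mat n n" using unitary_carrier[OF U] .
  have UU: "adj U * U = 1\<^sub>m n" using U unfolding unitary_def by auto
  let ?D = "mat_diag n (\<lambda>i. complex_of_real (lam i))"
  have Sc: "S \<in> carrier_mat n n" using Uc S by simp
  have "S * U = U * ?D * (adj U * U)" using Uc by (simp add: S assoc_mult_mat[of _ n n _ n _ n])
  hence SU: "S * U = U * ?D" using UU Uc by simp
  have "S *\<^sub>v col U j = col (U * ?D) j" using col_mult2[OF Sc Uc j] by (simp add: SU)
  also have "\<dots> = U *\<^sub>v col ?D j" using col_mult2[OF Uc mat_diag_dim j] .
  also have "col ?D j = complex_of_real (lam j) \<cdot>\<^sub>v unit_vec n j"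
    by (rule eq_vecI) (use j in \<open>auto simp: mat_diag_def\<close>)
  also have "U *\<^sub>v (complex_of_real (lam j) \<cdot>\<^sub>v unit_vec n j) = complex_of_real (lam j) \<cdot>\<^sub>v col U j"
    using Uc j by (simp add: mult_mat_vec mult_unit_vec)
  finally show ?thesis .
qed

lemma cinner_unitary_col:
  assumes U: "unitary n U" and j: "j < n"
  shows "cinner n (col U j) (col U j) = 1"
proof -
  have Uc: "U \<in> carrier_mat n n" using unitary_carrier[OF U] .
  have "(adj U * U) $$ (j,j) = cinner n (col U j) (col U j)"
    using index_mult_mat_sum[OF adj_carrier[OF Uc] Uc j j] Uc j by (simp add: cinner_def)
  thus ?thesis using U j unfolding unitary_def by simp
qed

text \<open>The tangent-line bound ln y \<le> ln r + y / r - 1, applied in the eigenbasis of S;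
  coordinates in the kernel of S are excluded, since there ln 0 = 0 is a junk value.\<close>

lemma spectral_ln_form_le:
  assumes U: "unitary n U" and S: "S = U * mat_diag n (\<lambda>i. complex_of_real (lam i)) * adj U"
    and x: "x \<in> carrier_vec n" and nx: "cinner n x x = 1"
    and lam0: "\<forall>j<n. 0 \<le> lam j" and ker: "\<forall>j<n. lam j = 0 \<longrightarrow> (adj U *\<^sub>v x) $ j = 0"
    and r: "r > 0"
  shows "Re (cinner n x ((U * mat_diag n (\<lambda>i. complex_of_real (ln (lam i))) * adj U) *\<^sub>v x))
    \<le> ln r + Re (cinner n x (S *\<^sub>v x)) / r - 1"
proof -
  have Uc: "U \<in> carrier_mat n n" using unitary_carrier[OF U] .
  define w where "w = adj U *\<^sub>v x"
  define nw where "nw = (\<lambda>j. (cmod (w $ j))\<^sup>2)"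
  have Re_form: "Re (cinner n x ((U * mat_diag n (\<lambda>i. complex_of_real (g i)) * adj U) *\<^sub>v x))
      = (\<Sum>j<n. g j * nw j)" for g
    unfolding cinner_spectral[OF Uc x] w_def[symmetric]
    by (simp add: Re_sum nw_def cnj_mult_self del: of_real_power flip: of_real_mult)
  have "(\<Sum>j<n. nw j) = 1"
  proof -
    have "cinner n w w = 1" using cinner_adj_unitary[OF U x] nx by (simp add: w_def)
    thus ?thesis unfolding cinner_def
      by (simp add: Re_sum nw_def cnj_mult_self del: of_real_power flip: of_real_sum)
  qed
  have "(\<Sum>j<n. ln (lam j) * nw j) \<le> (\<Sum>j<n. (ln r + lam j / r - 1) * nw j)"
  proof (rule sum_mono)
    fix j assume "j \<in> {..<n}"
    show "ln (lam j) * nw j \<le> (ln r + lam j / r - 1) * nw j"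
    proof (cases "w $ j = 0")
      case False
      hence lp: "lam j > 0" using ker lam0 \<open>j \<in> {..<n}\<close> by (force simp: w_def)
      have "ln (lam j / r) \<le> lam j / r - 1" by (rule ln_le_minus_one) (use lp r in simp)
      hence "ln (lam j) \<le> ln r + lam j / r - 1" using lp r by (simp add: ln_div)
      thus ?thesis by (rule mult_right_mono) (simp add: nw_def)
    qed (simp add: nw_def)
  qed
  also have "\<dots> = (\<Sum>j<n. (ln r - 1) * nw j + (lam j * nw j) / r)"
    by (rule sum.cong[OF refl]) (simp add: algebra_simps)
  also have "\<dots> = (ln r - 1) * (\<Sum>j<n. nw j) + (\<Sum>j<n. lam j * nw j) / r"
    by (simp only: sum.distrib sum_distrib_left sum_divide_distrib)
  finally show ?thesis using Re_form[of lam] Re_form[of "\<lambda>i. ln (lam i)"] \<open>(\<Sum>j<n. nw j) = 1\<close>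
    unfolding S by simp
qed

theorem mat_fun_ln_form_le:
  assumes S: "hermitian S" "dim_row S = n"
    and psd: "\<forall>y\<in>carrier_vec n. 0 \<le> Re (cinner n y (S *\<^sub>v y))"
    and x: "x \<in> carrier_vec n" "cinner n x x = 1"
    and ker: "\<forall>y\<in>carrier_vec n. S *\<^sub>v y = 0\<^sub>v n \<longrightarrow> cinner n x y = 0"
    and r: "r > 0"
  shows "Re (cinner n x (mat_fun ln S *\<^sub>v x)) \<le> ln r + Re (cinner n x (S *\<^sub>v x)) / r - 1"
proof -
  obtain U lam where U: "unitary n U" "S = U * mat_diag n (\<lambda>i. complex_of_real (lam i)) * adj U"
    "mat_fun ln S = U * mat_diag n (\<lambda>i. complex_of_real (ln (lam i))) * adj U"
    using mat_fun_spectral[OF S(1), of ln] S(2) by auto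
  have Uc: "U \<in> carrier_mat n n" using unitary_carrier[OF U(1)] .
  have colc: "col U j \<in> carrier_vec n" for j using Uc by (metis carrier_matD(1) carrier_vecI col_dim)
  have lam: "cinner n (col U j) (S *\<^sub>v col U j) = complex_of_real (lam j)" if "j < n" for j
    using spectral_col_eigenvector[OF U(1,2) that] cinner_smult_right[OF colc]
      cinner_unitary_col[OF U(1) that] by simp
  have lam0: "\<forall>j<n. 0 \<le> lam j"
  proof (intro allI impI)
    fix j assume j: "j < n"
    have "0 \<le> Re (cinner n (col U j) (S *\<^sub>v col U j))" using psd colc by blast
    thus "0 \<le> lam j" using lam[OF j] by simp
  qed
  have ker_U: "\<forall>j<n. lam j = 0 \<longrightarrow> (adj U *\<^sub>v x) $ j = 0"
  proof (intro allI impI)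
    fix j assume j: "j < n" and l: "lam j = 0"
    have "S *\<^sub>v col U j = 0\<^sub>v n"
      unfolding spectral_col_eigenvector[OF U(1,2) j] l
      using carrier_vecD[OF colc[of j]] carrier_matD(1)[OF Uc] by (intro eq_vecI) auto
    hence "cinner n x (col U j) = 0" using ker colc by blast
    thus "(adj U *\<^sub>v x) $ j = 0" using adj_mult_vec_index[OF Uc x(1) j] by simp
  qed
  show ?thesis unfolding U(3) by (rule spectral_ln_form_le[OF U(1,2) x lam0 ker_U r])
qed

lemma tr_minus:
  assumes "X \<in> carrier_mat n n" "Y \<in> carrier_mat n n"
  shows "tr (X - Y) = tr X - tr Y"
  unfolding tr_def using assms by (simp add: sum_subtractf)

lemma rel_entropy_eq_ereal:
  assumes \<rho>: "hermitian \<rho>" "dim_row \<rho> = n" and \<sigma>: "hermitian \<sigma>" "dim_row \<sigma> = n"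
    and supp: "\<forall>v\<in>carrier_vec n. \<sigma> *\<^sub>v v = 0\<^sub>v n \<longrightarrow> \<rho> *\<^sub>v v = 0\<^sub>v n"
  shows "rel_entropy \<rho> \<sigma> = ereal (Re (tr (\<rho> * mat_fun ln \<rho>)) - Re (tr (\<rho> * mat_fun ln \<sigma>)))"
proof -
  have \<rho>c: "\<rho> \<in> carrier_mat n n" and \<sigma>c: "\<sigma> \<in> carrier_mat n n"
    using \<rho> \<sigma> unfolding hermitian_def by auto
  have L: "mat_fun ln \<rho> \<in> carrier_mat n n" and M: "mat_fun ln \<sigma> \<in> carrier_mat n n"
    using mat_fun_carrier[OF \<rho>(1)] mat_fun_carrier[OF \<sigma>(1)] \<rho>(2) \<sigma>(2) by auto
  have "tr (\<rho> * (mat_fun ln \<rho> - mat_fun ln \<sigma>)) = tr (\<rho> * mat_fun ln \<rho>) - tr (\<rho> * mat_fun ln \<sigma>)"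
    using L M \<rho>c by (simp add: mult_minus_distrib_mat[OF \<rho>c L M] tr_minus[of _ n])
  thus ?thesis using supp \<rho>c \<sigma>c unfolding rel_entropy_def by simp
qed

section \<open>Bell diagonal states\<close>

lemma less_4_cases: "(a::nat) < 4 \<longleftrightarrow> a = 0 \<or> a = 1 \<or> a = 2 \<or> a = 3" by auto
lemma lessThan_4: "{..<4::nat} = {0,1,2,3}" by auto
lemma atLeastAtMost_1_4: "{1..4::nat} = {1,2,3,4}" by auto

definition isqrt2 :: complex where "isqrt2 = complex_of_real (1 / sqrt 2)"

lemma isqrt2_mult_self: "isqrt2 * isqrt2 = 1/2"
  unfolding isqrt2_def by (simp flip: of_real_mult)

lemma isqrt2_mult_self_left: "isqrt2 * (isqrt2 * x) = x / 2"
  by (simp add: mult.assoc[symmetric] isqrt2_mult_self)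

lemma cnj_isqrt2 [simp]: "cnj isqrt2 = isqrt2"
  unfolding isqrt2_def by simp

lemma bell_values:
  "bell 1 0 = isqrt2" "bell (Suc 0) 0 = isqrt2" "bell 1 1 = 0" "bell 1 (Suc 0) = 0"
  "bell (Suc 0) 1 = 0" "bell (Suc 0) (Suc 0) = 0" "bell 1 2 = 0" "bell (Suc 0) 2 = 0"
  "bell 1 3 = isqrt2" "bell (Suc 0) 3 = isqrt2"
  "bell 2 0 = isqrt2" "bell 2 1 = 0" "bell 2 (Suc 0) = 0" "bell 2 2 = 0" "bell 2 3 = - isqrt2"
  "bell 3 0 = 0" "bell 3 1 = isqrt2" "bell 3 (Suc 0) = isqrt2" "bell 3 2 = isqrt2" "bell 3 3 = 0"
  "bell 4 0 = 0" "bell 4 1 = isqrt2" "bell 4 (Suc 0) = isqrt2" "bell 4 2 = - isqrt2" "bell 4 3 = 0"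
  by (simp_all add: bell_def isqrt2_def numeral_eq_Suc)

lemma cnj_bell: "a < 4 \<Longrightarrow> cnj (bell k a) = bell k a"
  unfolding bell_def less_4_cases by (auto simp: nth_Cons')

lemma bell_orthonormal:
  assumes "k \<in> {1..4}" "l \<in> {1..4}"
  shows "(\<Sum>a<4. cnj (bell k a) * bell l a) = (if k = l then 1 else 0)"
  using assms unfolding lessThan_4 atLeastAtMost_1_4 by (auto simp: bell_values isqrt2_mult_self)

lemma bell_complete:
  assumes "a < 4" "b < 4"
  shows "(\<Sum>k\<in>{1..4}. bell k a * cnj (bell k b)) = (if a = b then 1 else 0)"
  using assms unfolding less_4_cases atLeastAtMost_1_4 by (auto simp: bell_values isqrt2_mult_self)

definition bell_vec :: "nat \<Rightarrow> complex vec" where "bell_vec i = vec 4 (bell i)"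

lemma bell_vec_carrier [simp]: "bell_vec i \<in> carrier_vec 4" by (simp add: bell_vec_def)
lemma dim_bell_vec [simp]: "dim_vec (bell_vec i) = 4" by (simp add: bell_vec_def)
lemma bell_vec_index [simp]: "a < 4 \<Longrightarrow> bell_vec i $ a = bell i a" by (simp add: bell_vec_def)

lemma cinner_bell_vec: "v \<in> carrier_vec 4 \<Longrightarrow> cinner 4 (bell_vec i) v = (\<Sum>b<4. bell i b * v $ b)"
  unfolding cinner_def by (rule sum.cong) (auto simp: cnj_bell)

lemma cinner_bell_vec_bell_vec:
  "k \<in> {1..4} \<Longrightarrow> l \<in> {1..4} \<Longrightarrow> cinner 4 (bell_vec k) (bell_vec l) = (if k = l then 1 else 0)"
  unfolding cinner_def using bell_orthonormal[of k l] by simp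

lemma bell_diag_carrier [simp]: "bell_diag p \<in> carrier_mat 4 4"
  by (simp add: bell_diag_def)

lemma bell_diag_dims [simp]: "dim_row (bell_diag p) = 4" "dim_col (bell_diag p) = 4"
  by (simp_all add: bell_diag_def)

lemma bell_diag_entry: "a < 4 \<Longrightarrow> b < 4 \<Longrightarrow>
  bell_diag p $$ (a,b) = (\<Sum>i\<in>{1..4}. complex_of_real (p i) * (bell i a * bell i b))"
  by (simp add: bell_diag_def proj_def cnj_bell)

lemma hermitian_bell_diag: "hermitian (bell_diag p)"
  unfolding hermitian_def
proof (intro conjI)
  show "adj (bell_diag p) = bell_diag p"
    by (rule eq_matI) (auto simp: bell_diag_entry cnj_bell mult.commute)
qed simp

lemma bell_diag_mult_vec_index:
  assumes v: "v \<in> carrier_vec 4" and a: "a < 4"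
  shows "(bell_diag p *\<^sub>v v) $ a = (\<Sum>i\<in>{1..4}. complex_of_real (p i) * bell i a * cinner 4 (bell_vec i) v)"
proof -
  have "(bell_diag p *\<^sub>v v) $ a = (\<Sum>b<4. \<Sum>i\<in>{1..4}. complex_of_real (p i) * bell i a * (bell i b * v $ b))"
    unfolding index_mult_mat_vec_sum[OF bell_diag_carrier v a]
    by (rule sum.cong[OF refl])
       (use a in \<open>simp add: bell_diag_entry sum_distrib_right sum_distrib_left mult_ac\<close>)
  also have "\<dots> = (\<Sum>i\<in>{1..4}. \<Sum>b<4. complex_of_real (p i) * bell i a * (bell i b * v $ b))"
    by (rule sum.swap)
  also have "\<dots> = (\<Sum>i\<in>{1..4}. complex_of_real (p i) * bell i a * cinner 4 (bell_vec i) v)"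
    by (rule sum.cong[OF refl]) (simp add: cinner_bell_vec[OF v] sum_distrib_left)
  finally show ?thesis .
qed

lemma cinner_bell_vec_bell_diag:
  assumes v: "v \<in> carrier_vec 4" and k: "k \<in> {1..4}"
  shows "cinner 4 (bell_vec k) (bell_diag p *\<^sub>v v) = complex_of_real (p k) * cinner 4 (bell_vec k) v"
proof -
  have "cinner 4 (bell_vec k) (bell_diag p *\<^sub>v v) =
     (\<Sum>a<4. bell k a * (\<Sum>i\<in>{1..4}. complex_of_real (p i) * bell i a * cinner 4 (bell_vec i) v))"
    unfolding cinner_bell_vec[OF mult_mat_vec_carrier[OF bell_diag_carrier v]]
    by (rule sum.cong[OF refl]) (simp add: bell_diag_mult_vec_index[OF v] del: index_mult_mat_vec)
  also have "\<dots> = (\<Sum>a<4. \<Sum>i\<in>{1..4}. complex_of_real (p i) * cinner 4 (bell_vec i) v * (cnj (bell k a) * bell i a))"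
    by (rule sum.cong[OF refl]) (simp add: sum_distrib_left cnj_bell mult_ac)
  also have "\<dots> = (\<Sum>i\<in>{1..4}. complex_of_real (p i) * cinner 4 (bell_vec i) v * (\<Sum>a<4. cnj (bell k a) * bell i a))"
    by (subst sum.swap) (simp add: sum_distrib_left)
  also have "\<dots> = (\<Sum>i\<in>{1..4}. if i = k then complex_of_real (p k) * cinner 4 (bell_vec k) v else 0)"
    by (rule sum.cong[OF refl]) (use k in \<open>simp add: bell_orthonormal\<close>)
  also have "\<dots> = complex_of_real (p k) * cinner 4 (bell_vec k) v" using k by simp
  finally show ?thesis .
qed

lemma bell_diag_bell_vec:
  assumes k: "k \<in> {1..4}"
  shows "bell_diag p *\<^sub>v bell_vec k = complex_of_real (p k) \<cdot>\<^sub>v bell_vec k"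
proof (rule eq_vecI)
  fix a assume "a < dim_vec (complex_of_real (p k) \<cdot>\<^sub>v bell_vec k)"
  hence a: "a < 4" by simp
  have "(bell_diag p *\<^sub>v bell_vec k) $ a = (\<Sum>i\<in>{1..4}. if i = k then complex_of_real (p k) * bell k a else 0)"
    unfolding bell_diag_mult_vec_index[OF bell_vec_carrier a]
    by (rule sum.cong[OF refl]) (use k in \<open>simp add: cinner_bell_vec_bell_vec\<close>)
  thus "(bell_diag p *\<^sub>v bell_vec k) $ a = (complex_of_real (p k) \<cdot>\<^sub>v bell_vec k) $ a"
    using a k by simp
qed simp

lemma bell_diag_kernel_iff:
  assumes v: "v \<in> carrier_vec 4"
  shows "bell_diag p *\<^sub>v v = 0\<^sub>v 4 \<longleftrightarrow> (\<forall>i\<in>{1..4}. p i \<noteq> 0 \<longrightarrow> cinner 4 (bell_vec i) v = 0)"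
proof
  assume h: "bell_diag p *\<^sub>v v = 0\<^sub>v 4"
  show "\<forall>i\<in>{1..4}. p i \<noteq> 0 \<longrightarrow> cinner 4 (bell_vec i) v = 0"
  proof (intro ballI impI)
    fix i :: nat assume i: "i \<in> {1..4}" and "p i \<noteq> 0"
    have "complex_of_real (p i) * cinner 4 (bell_vec i) v = cinner 4 (bell_vec i) (bell_diag p *\<^sub>v v)"
      using cinner_bell_vec_bell_diag[OF v i] by simp
    also have "\<dots> = 0" unfolding h by (simp add: cinner_def)
    finally show "cinner 4 (bell_vec i) v = 0" using \<open>p i \<noteq> 0\<close> by simp
  qed
next
  assume h: "\<forall>i\<in>{1..4}. p i \<noteq> 0 \<longrightarrow> cinner 4 (bell_vec i) v = 0"
  show "bell_diag p *\<^sub>v v = 0\<^sub>v 4"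
  proof (rule eq_vecI)
    fix a assume "a < dim_vec (0\<^sub>v 4 :: complex vec)" hence a: "a < 4" by simp
    have "(\<Sum>i\<in>{1..4}. complex_of_real (p i) * bell i a * cinner 4 (bell_vec i) v) = 0"
      by (rule sum.neutral) (use h in auto)
    thus "(bell_diag p *\<^sub>v v) $ a = 0\<^sub>v 4 $ a" using a bell_diag_mult_vec_index[OF v a] by simp
  qed simp
qed

lemma tr_bell_diag_mult:
  assumes M: "M \<in> carrier_mat 4 4"
  shows "tr (bell_diag p * M) = (\<Sum>i\<in>{1..4}. complex_of_real (p i) * cinner 4 (bell_vec i) (M *\<^sub>v bell_vec i))"
proof -
  have "tr (bell_diag p * M) = (\<Sum>a<4. (bell_diag p * M) $$ (a,a))"
    unfolding tr_def using M by simp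
  also have "\<dots> = (\<Sum>a<4. \<Sum>b<4. \<Sum>i\<in>{1..4}. complex_of_real (p i) * (bell i b * (M $$ (b,a) * bell i a)))"
    by (rule sum.cong[OF refl])
       (use M in \<open>auto simp: index_mult_mat_sum[OF bell_diag_carrier M] bell_diag_entry sum_distrib_right
          sum_distrib_left mult_ac simp del: index_mult_mat intro!: sum.cong\<close>)
  also have "\<dots> = (\<Sum>a<4. \<Sum>i\<in>{1..4}. \<Sum>b<4. complex_of_real (p i) * (bell i b * (M $$ (b,a) * bell i a)))"
    by (rule sum.cong[OF refl], rule sum.swap)
  also have "\<dots> = (\<Sum>i\<in>{1..4}. \<Sum>a<4. \<Sum>b<4. complex_of_real (p i) * (bell i b * (M $$ (b,a) * bell i a)))"
    by (rule sum.swap)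
  also have "\<dots> = (\<Sum>i\<in>{1..4}. \<Sum>b<4. \<Sum>a<4. complex_of_real (p i) * (bell i b * (M $$ (b,a) * bell i a)))"
    by (rule sum.cong[OF refl], rule sum.swap)
  also have "\<dots> = (\<Sum>i\<in>{1..4}. complex_of_real (p i) * cinner 4 (bell_vec i) (M *\<^sub>v bell_vec i))"
    by (rule sum.cong[OF refl])
       (use M in \<open>simp add: cinner_bell_vec index_mult_mat_vec_sum[OF M bell_vec_carrier] sum_distrib_left del: index_mult_mat_vec\<close>)
  finally show ?thesis .
qed

lemma tr_eq_sum_bell:
  assumes M: "M \<in> carrier_mat 4 4"
  shows "(\<Sum>i\<in>{1..4}. cinner 4 (bell_vec i) (M *\<^sub>v bell_vec i)) = tr M"
proof -
  have "(\<Sum>i\<in>{1..4}. cinner 4 (bell_vec i) (M *\<^sub>v bell_vec i))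
      = (\<Sum>i\<in>{1..4}. \<Sum>b<4. \<Sum>a<4. M $$ (b,a) * (bell i a * cnj (bell i b)))"
    by (rule sum.cong[OF refl])
       (use M in \<open>simp add: cinner_bell_vec index_mult_mat_vec_sum[OF M bell_vec_carrier] sum_distrib_left cnj_bell mult_ac del: index_mult_mat_vec\<close>)
  also have "\<dots> = (\<Sum>b<4. \<Sum>i\<in>{1..4}. \<Sum>a<4. M $$ (b,a) * (bell i a * cnj (bell i b)))"
    by (rule sum.swap)
  also have "\<dots> = (\<Sum>b<4. \<Sum>a<4. \<Sum>i\<in>{1..4}. M $$ (b,a) * (bell i a * cnj (bell i b)))"
    by (rule sum.cong[OF refl], rule sum.swap)
  also have "\<dots> = (\<Sum>b<4. \<Sum>a<4. M $$ (b,a) * (\<Sum>i\<in>{1..4}. bell i a * cnj (bell i b)))"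
    by (simp add: sum_distrib_left)
  also have "\<dots> = (\<Sum>b<4. \<Sum>a<4. if a = b then M $$ (b,b) else 0)"
    by (intro sum.cong refl) (simp add: bell_complete bell_complete[unfolded One_nat_def])
  also have "\<dots> = tr M" unfolding tr_def using M by simp
  finally show ?thesis .
qed

lemma tr_bell_diag_mat_fun_ln:
  "Re (tr (bell_diag p * mat_fun ln (bell_diag r))) = (\<Sum>i\<in>{1..4}. p i * ln (r i))"
proof -
  obtain U lam where U: "unitary 4 U"
    "bell_diag r = U * mat_diag 4 (\<lambda>i. complex_of_real (lam i)) * adj U"
    "mat_fun ln (bell_diag r) = U * mat_diag 4 (\<lambda>i. complex_of_real (ln (lam i))) * adj U"
    using mat_fun_spectral[OF hermitian_bell_diag, of r ln] by auto
  have "cinner 4 (bell_vec i) (mat_fun ln (bell_diag r) *\<^sub>v bell_vec i) = complex_of_real (ln (r i))"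
    if i: "i \<in> {1..4}" for i
    unfolding U(3) using cinner_bell_vec_bell_vec[OF i i]
    by (intro cinner_spectral_eigenvector[OF U(1,2) bell_vec_carrier bell_diag_bell_vec[OF i]]) simp
  moreover have "mat_fun ln (bell_diag r) \<in> carrier_mat 4 4"
    using mat_fun_carrier[OF hermitian_bell_diag, of ln r] by simp
  ultimately have "tr (bell_diag p * mat_fun ln (bell_diag r))
      = (\<Sum>i\<in>{1..4}. complex_of_real (p i) * complex_of_real (ln (r i)))"
    by (simp add: tr_bell_diag_mult)
  thus ?thesis by (simp add: Re_sum)
qed

section \<open>Product and separable states\<close>

lemma Re_cnj_mult_self: "Re (cnj z * z) = (cmod z)\<^sup>2"
  by (simp add: cnj_mult_self)

lemma nonneg_form_2x2:
  fixes F01 :: complex and f0 f1 :: real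
  assumes pos: "\<forall>s t. 0 \<le> Re (cnj s * complex_of_real f0 * s + cnj s * F01 * t + cnj t * cnj F01 * s
      + cnj t * complex_of_real f1 * t)"
  shows "0 \<le> f0" "0 \<le> f1" "(cmod F01)\<^sup>2 \<le> f0 * f1"
proof -
  show f0: "0 \<le> f0" using spec[OF spec[OF pos, of 1], of 0] by simp
  show f1: "0 \<le> f1" using spec[OF spec[OF pos, of 0], of 1] by simp
  show "(cmod F01)\<^sup>2 \<le> f0 * f1"
  proof (cases "f0 = 0")
    case False
    hence f0p: "f0 > 0" using f0 by simp
    have "0 \<le> Re (cnj (- F01) * complex_of_real f0 * (- F01) + cnj (- F01) * F01 * complex_of_real f0
       + complex_of_real f0 * cnj F01 * (- F01) + complex_of_real f0 * complex_of_real f1 * complex_of_real f0)"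
      using spec[OF spec[OF pos, of "- F01"], of "complex_of_real f0"] by simp
    also have "\<dots> = f0 * (f0 * f1 - (cmod F01)\<^sup>2)"
    proof -
      have "cnj (- F01) * complex_of_real f0 * (- F01) + cnj (- F01) * F01 * complex_of_real f0
       + complex_of_real f0 * cnj F01 * (- F01) + complex_of_real f0 * complex_of_real f1 * complex_of_real f0
        = complex_of_real f0 * (complex_of_real f0 * complex_of_real f1 - cnj F01 * F01)"
        by (simp add: algebra_simps)
      thus ?thesis by (simp add: cnj_mult_self)
    qed
    finally show ?thesis using f0p by (simp add: zero_le_mult_iff)
  next
    case True
    show ?thesis
    proof (rule ccontr)
      assume "\<not> ?thesis"
      hence np: "(cmod F01)\<^sup>2 > 0" using True by simp
      define T where "T = (f1 + 1) / (2 * (cmod F01)\<^sup>2)"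
      have "0 \<le> Re (cnj (- F01 * complex_of_real T) * complex_of_real f0 * (- F01 * complex_of_real T)
        + cnj (- F01 * complex_of_real T) * F01 * 1 + cnj 1 * cnj F01 * (- F01 * complex_of_real T)
        + cnj 1 * complex_of_real f1 * 1)"
        using spec[OF spec[OF pos, of "- F01 * complex_of_real T"], of 1] by simp
      also have "\<dots> = f1 - 2 * T * (cmod F01)\<^sup>2"
      proof -
        have "cnj (- F01 * complex_of_real T) * complex_of_real f0 * (- F01 * complex_of_real T)
        + cnj (- F01 * complex_of_real T) * F01 * 1 + cnj 1 * cnj F01 * (- F01 * complex_of_real T)
        + cnj 1 * complex_of_real f1 * 1 = complex_of_real f1 - 2 * complex_of_real T * (cnj F01 * F01)"
          using True by (simp add: algebra_simps)
        thus ?thesis by (simp add: cnj_mult_self)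
      qed
      also have "\<dots> = -1" using np by (simp add: T_def field_simps)
      finally show False by simp
    qed
  qed
qed

lemma abs_Re_le_mean:
  fixes w :: complex and X Y :: real
  assumes "0 \<le> X" "0 \<le> Y" "(cmod w)\<^sup>2 \<le> X * Y"
  shows "\<bar>Re w\<bar> \<le> (X + Y) / 2"
proof -
  have "X * Y \<le> ((X + Y) / 2)\<^sup>2"
    using zero_le_power2[of "(X - Y) / 2"] by (simp add: power2_eq_square field_simps)
  hence "(cmod w)\<^sup>2 \<le> ((X + Y) / 2)\<^sup>2" using assms(3) by linarith
  hence "cmod w \<le> (X + Y) / 2" by (rule power2_le_imp_le) (use assms in simp)
  thus ?thesis using abs_Re_le_cmod[of w] by linarith
qed

lemma frobenius_2x2_nonneg:
  fixes u G :: complex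
  assumes "0 \<le> b" "0 \<le> e" "(cmod u)\<^sup>2 \<le> b * e" "0 \<le> g0" "0 \<le> g1" "(cmod G)\<^sup>2 \<le> g0 * g1"
  shows "0 \<le> b * g0 + e * g1 + 2 * Re (u * G)"
proof -
  have "(cmod (u * G))\<^sup>2 = (cmod u)\<^sup>2 * (cmod G)\<^sup>2" by (simp add: norm_mult power_mult_distrib)
  also have "\<dots> \<le> (b * e) * (g0 * g1)" using assms by (intro mult_mono) auto
  finally have "(cmod (u * G))\<^sup>2 \<le> (b * g0) * (e * g1)" by (simp add: mult_ac)
  hence "\<bar>Re (u * G)\<bar> \<le> (b * g0 + e * g1) / 2" using assms by (intro abs_Re_le_mean) auto
  hence "- Re (u * G) \<le> (b * g0 + e * g1) / 2" by (rule order_trans[OF abs_ge_minus_self])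
  thus ?thesis by (simp add: field_simps)
qed

lemma lessThan_2: "{..<2::nat} = {0,1}" by auto

lemma density_2x2:
  assumes "density 2 A"
  shows "\<exists>a d. A $$ (0,0) = complex_of_real a \<and> A $$ (1,1) = complex_of_real d \<and>
     A $$ (1,0) = cnj (A $$ (0,1)) \<and> 0 \<le> a \<and> 0 \<le> d \<and> a + d = 1 \<and> (cmod (A $$ (0,1)))\<^sup>2 \<le> a * d \<and>
     (\<forall>s t. 0 \<le> Re (cnj s * A $$ (0,0) * s + cnj s * A $$ (0,1) * t + cnj t * A $$ (1,0) * s
      + cnj t * A $$ (1,1) * t))"
proof -
  have Ac: "A \<in> carrier_mat 2 2" and h: "adj A = A" and tr: "tr A = 1"
    and ps: "\<forall>v::nat \<Rightarrow> complex. 0 \<le> Re (\<Sum>i<2. \<Sum>j<2. cnj (v i) * A $$ (i,j) * v j)"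
    using assms unfolding density_def psd_def hermitian_def by auto
  have e10: "A $$ (1,0) = cnj (A $$ (0,1))" using hermitian_entry[OF Ac h, of 1 0] by simp
  have e00: "A $$ (0,0) = complex_of_real (Re (A $$ (0,0)))"
    using hermitian_entry[OF Ac h, of 0 0] by (metis Reals_cnj_iff Re_complex_of_real Reals_cases zero_less_numeral)
  have e11: "A $$ (1,1) = complex_of_real (Re (A $$ (1,1)))"
    using hermitian_entry[OF Ac h, of 1 1] by (metis Reals_cnj_iff Re_complex_of_real Reals_cases one_less_numeral_iff semiring_norm(76))
  have pos: "\<forall>s t. 0 \<le> Re (cnj s * A $$ (0,0) * s + cnj s * A $$ (0,1) * t + cnj t * A $$ (1,0) * s
      + cnj t * A $$ (1,1) * t)"
  proof (intro allI)
    fix s t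
    have "0 \<le> Re (\<Sum>i<2. \<Sum>j<2. cnj ((\<lambda>i. if i = 0 then s else t) i) * A $$ (i,j) * (\<lambda>i. if i = 0 then s else t) j)"
      using spec[OF ps, of "\<lambda>i. if i = 0 then s else t"] by simp
    thus "0 \<le> Re (cnj s * A $$ (0,0) * s + cnj s * A $$ (0,1) * t + cnj t * A $$ (1,0) * s
      + cnj t * A $$ (1,1) * t)" unfolding lessThan_2 by (simp add: algebra_simps)
  qed
  have pos': "\<forall>s t. 0 \<le> Re (cnj s * complex_of_real (Re (A $$ (0,0))) * s + cnj s * A $$ (0,1) * t
      + cnj t * cnj (A $$ (0,1)) * s + cnj t * complex_of_real (Re (A $$ (1,1))) * t)"
    using pos e00 e11 e10 by metis
  note P = nonneg_form_2x2[OF pos']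
  have "tr A = A $$ (0,0) + A $$ (1,1)" unfolding tr_def using Ac by (simp add: lessThan_2)
  hence "Re (A $$ (0,0)) + Re (A $$ (1,1)) = 1" using tr by (metis Re_complex_of_real plus_complex.sel(1) one_complex.sel(1))
  thus ?thesis using P e00 e11 e10 pos by blast
qed

lemma density_carrier: "density n A \<Longrightarrow> A \<in> carrier_mat n n"
  unfolding density_def psd_def by auto

lemma kron_carrier: "A \<in> carrier_mat 2 2 \<Longrightarrow> B \<in> carrier_mat 2 2 \<Longrightarrow> kron A B \<in> carrier_mat 4 4"
  unfolding kron_def by auto

lemma kron_entry: "A \<in> carrier_mat 2 2 \<Longrightarrow> B \<in> carrier_mat 2 2 \<Longrightarrow> a < 4 \<Longrightarrow> b < 4 \<Longrightarrow>
  kron A B $$ (a,b) = A $$ (a div 2, b div 2) * B $$ (a mod 2, b mod 2)"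
  unfolding kron_def by auto

lemma cinner_kron:
  assumes A: "A \<in> carrier_mat 2 2" and B: "B \<in> carrier_mat 2 2" and x: "x \<in> carrier_vec 4"
  shows "cinner 4 x (kron A B *\<^sub>v x) = (\<Sum>a<4. \<Sum>b<4. cnj (x $ a) * (A $$ (a div 2, b div 2) * B $$ (a mod 2, b mod 2)) * x $ b)"
  unfolding cinner_def
  by (rule sum.cong[OF refl]) (simp add: index_mult_mat_vec_sum[OF kron_carrier[OF A B] x] kron_entry[OF A B]
      sum_distrib_left mult_ac del: index_mult_mat_vec)

lemma cinner_singlet_kron:
  assumes A: "A \<in> carrier_mat 2 2" and B: "B \<in> carrier_mat 2 2"
  shows "cinner 4 (bell_vec 4) (kron A B *\<^sub>v bell_vec 4) = (1/2) * (A $$ (0,0) * B $$ (1,1) + A $$ (1,1) * B $$ (0,0)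
     - A $$ (0,1) * B $$ (1,0) - A $$ (1,0) * B $$ (0,1))"
proof -
  have "cinner 4 (bell_vec 4) (kron A B *\<^sub>v bell_vec 4) = isqrt2 * isqrt2 * (A $$ (0,0) * B $$ (1,1) + A $$ (1,1) * B $$ (0,0)
     - A $$ (0,1) * B $$ (1,0) - A $$ (1,0) * B $$ (0,1))"
    unfolding cinner_kron[OF A B bell_vec_carrier] lessThan_4
    by (simp add: bell_values algebra_simps)
  thus ?thesis by (simp add: isqrt2_mult_self)
qed

lemma cinner_singlet_kron_le:
  assumes A: "density 2 A" and B: "density 2 B"
  shows "Re (cinner 4 (bell_vec 4) (kron A B *\<^sub>v bell_vec 4)) \<le> 1/2"
proof -
  obtain a d where ad: "A $$ (0,0) = complex_of_real a" "A $$ (1,1) = complex_of_real d"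
     "A $$ (1,0) = cnj (A $$ (0,1))" "0 \<le> a" "0 \<le> d" "a + d = 1" "(cmod (A $$ (0,1)))\<^sup>2 \<le> a * d"
    using density_2x2[OF A] by blast
  obtain b e where be: "B $$ (0,0) = complex_of_real b" "B $$ (1,1) = complex_of_real e"
     "B $$ (1,0) = cnj (B $$ (0,1))" "0 \<le> b" "0 \<le> e" "b + e = 1" "(cmod (B $$ (0,1)))\<^sup>2 \<le> b * e"
    using density_2x2[OF B] by blast
  define z where "z = A $$ (0,1)"
  define u where "u = B $$ (0,1)"
  define w where "w = z * cnj u"
  have eq: "cinner 4 (bell_vec 4) (kron A B *\<^sub>v bell_vec 4) = (1/2) * (complex_of_real (a * e + d * b) - (w + cnj w))"
    unfolding cinner_singlet_kron[OF density_carrier[OF A] density_carrier[OF B]] ad be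
    by (simp add: w_def z_def u_def ad[unfolded One_nat_def] be[unfolded One_nat_def] algebra_simps)
  have "(cmod w)\<^sup>2 \<le> (a * b) * (d * e)"
  proof -
    have "(cmod w)\<^sup>2 = (cmod z)\<^sup>2 * (cmod u)\<^sup>2" by (simp add: w_def norm_mult power_mult_distrib)
    also have "\<dots> \<le> (a * d) * (b * e)"
      using ad(4,5,7) be(4,5,7) unfolding z_def u_def by (intro mult_mono) auto
    finally show ?thesis by (simp add: mult_ac)
  qed
  hence h1: "\<bar>Re w\<bar> \<le> (a * b + d * e) / 2" using abs_Re_le_mean[of "a*b" "d*e" w] ad be by simp
  have h2: "Re (cinner 4 (bell_vec 4) (kron A B *\<^sub>v bell_vec 4)) = (a * e + d * b) / 2 - Re w"
    unfolding eq by simp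
  have h3: "a * e + d * b + (a * b + d * e) = 1"
  proof -
    have "a * e + d * b + (a * b + d * e) = (a + d) * (b + e)" by (simp add: algebra_simps)
    thus ?thesis using ad(6) be(6) by simp
  qed
  have "Re (cinner 4 (bell_vec 4) (kron A B *\<^sub>v bell_vec 4)) \<le> (a * e + d * b) / 2 + (a * b + d * e) / 2"
    using h1 h2 abs_ge_minus_self[of "Re w"] by linarith
  also have "\<dots> = 1/2" using h3 by (simp add: field_simps)
  finally show ?thesis .
qed

lemma cinner_kron_nonneg:
  assumes A: "density 2 A" and B: "density 2 B" and x: "x \<in> carrier_vec 4"
  shows "0 \<le> Re (cinner 4 x (kron A B *\<^sub>v x))"
proof -
  obtain a d where ad: "A $$ (0,0) = complex_of_real a" "A $$ (1,1) = complex_of_real d"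
     "A $$ (1,0) = cnj (A $$ (0,1))" "0 \<le> a" "0 \<le> d" "a + d = 1" "(cmod (A $$ (0,1)))\<^sup>2 \<le> a * d"
     and posA: "\<forall>s t. 0 \<le> Re (cnj s * A $$ (0,0) * s + cnj s * A $$ (0,1) * t + cnj t * A $$ (1,0) * s
      + cnj t * A $$ (1,1) * t)"
    using density_2x2[OF A] by blast
  obtain b e where be: "B $$ (0,0) = complex_of_real b" "B $$ (1,1) = complex_of_real e"
     "B $$ (1,0) = cnj (B $$ (0,1))" "0 \<le> b" "0 \<le> e" "b + e = 1" "(cmod (B $$ (0,1)))\<^sup>2 \<le> b * e"
    using density_2x2[OF B] by blast
  define z where "z = A $$ (0,1)"
  define u where "u = B $$ (0,1)"
  define x0 where "x0 = x $ 0"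
  define x1 where "x1 = x $ 1"
  define x2 where "x2 = x $ 2"
  define x3 where "x3 = x $ 3"
  define G00 where "G00 = cnj x0 * complex_of_real a * x0 + cnj x0 * z * x2 + cnj x2 * cnj z * x0 + cnj x2 * complex_of_real d * x2"
  define G01 where "G01 = cnj x0 * complex_of_real a * x1 + cnj x0 * z * x3 + cnj x2 * cnj z * x1 + cnj x2 * complex_of_real d * x3"
  define G11 where "G11 = cnj x1 * complex_of_real a * x1 + cnj x1 * z * x3 + cnj x3 * cnj z * x1 + cnj x3 * complex_of_real d * x3"
  have eq: "cinner 4 x (kron A B *\<^sub>v x) = complex_of_real b * G00 + u * G01 + cnj u * cnj G01 + complex_of_real e * G11"
    unfolding cinner_kron[OF density_carrier[OF A] density_carrier[OF B] x] lessThan_4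
    by (simp add: ad be ad[unfolded One_nat_def] be[unfolded One_nat_def] G00_def G01_def G11_def x0_def x1_def x2_def x3_def z_def u_def algebra_simps)
  have g00: "G00 = complex_of_real (Re G00)"
  proof -
    have "cnj G00 = G00" by (simp add: G00_def algebra_simps)
    thus ?thesis by (metis Reals_cnj_iff Re_complex_of_real Reals_cases)
  qed
  have g11: "G11 = complex_of_real (Re G11)"
  proof -
    have "cnj G11 = G11" by (simp add: G11_def algebra_simps)
    thus ?thesis by (metis Reals_cnj_iff Re_complex_of_real Reals_cases)
  qed
  have posG: "\<forall>s t. 0 \<le> Re (cnj s * complex_of_real (Re G00) * s + cnj s * G01 * t + cnj t * cnj G01 * s
      + cnj t * complex_of_real (Re G11) * t)"
  proof (intro allI)
    fix s t
    have "0 \<le> Re (cnj (s * x0 + t * x1) * A $$ (0,0) * (s * x0 + t * x1) + cnj (s * x0 + t * x1) * A $$ (0,1) * (s * x2 + t * x3)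
       + cnj (s * x2 + t * x3) * A $$ (1,0) * (s * x0 + t * x1) + cnj (s * x2 + t * x3) * A $$ (1,1) * (s * x2 + t * x3))"
      using posA by blast
    also have "cnj (s * x0 + t * x1) * A $$ (0,0) * (s * x0 + t * x1) + cnj (s * x0 + t * x1) * A $$ (0,1) * (s * x2 + t * x3)
       + cnj (s * x2 + t * x3) * A $$ (1,0) * (s * x0 + t * x1) + cnj (s * x2 + t * x3) * A $$ (1,1) * (s * x2 + t * x3)
      = cnj s * G00 * s + cnj s * G01 * t + cnj t * cnj G01 * s + cnj t * G11 * t"
      unfolding ad(1,2,3) z_def[symmetric] by (simp add: G00_def G01_def G11_def algebra_simps)
    finally show "0 \<le> Re (cnj s * complex_of_real (Re G00) * s + cnj s * G01 * t + cnj t * cnj G01 * s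
      + cnj t * complex_of_real (Re G11) * t)" using g00 g11 by simp
  qed
  have "Re (cinner 4 x (kron A B *\<^sub>v x)) = b * Re G00 + e * Re G11 + 2 * Re (u * G01)"
    unfolding eq by simp
  thus ?thesis
    using frobenius_2x2_nonneg[OF be(4,5) be(7)[folded u_def] nonneg_form_2x2[OF posG]] by simp
qed

lemma cnj_kron_entry:
  assumes A: "density 2 A" and B: "density 2 B" and a: "a < 4" and b: "b < 4"
  shows "cnj (kron A B $$ (b,a)) = kron A B $$ (a,b)"
proof -
  have Ac: "A \<in> carrier_mat 2 2" and hA: "adj A = A" using A unfolding density_def psd_def hermitian_def by auto
  have Bc: "B \<in> carrier_mat 2 2" and hB: "adj B = B" using B unfolding density_def psd_def hermitian_def by auto
  have "cnj (A $$ (b div 2, a div 2)) = A $$ (a div 2, b div 2)"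
    using hermitian_entry[OF Ac hA, of "a div 2" "b div 2"] a b by simp
  moreover have "cnj (B $$ (b mod 2, a mod 2)) = B $$ (a mod 2, b mod 2)"
    using hermitian_entry[OF Bc hB, of "a mod 2" "b mod 2"] by simp
  ultimately show ?thesis using a b by (simp add: kron_entry[OF Ac Bc])
qed

lemma kron_diag_sum:
  assumes A: "density 2 A" and B: "density 2 B"
  shows "(\<Sum>a<4. kron A B $$ (a,a)) = 1"
proof -
  have Ac: "A \<in> carrier_mat 2 2" and tA: "tr A = 1" using A unfolding density_def psd_def by auto
  have Bc: "B \<in> carrier_mat 2 2" and tB: "tr B = 1" using B unfolding density_def psd_def by auto
  have "(\<Sum>a<4. kron A B $$ (a,a)) = (A $$ (0,0) + A $$ (1,1)) * (B $$ (0,0) + B $$ (1,1))"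
    unfolding lessThan_4 by (simp add: kron_entry[OF Ac Bc] algebra_simps)
  also have "A $$ (0,0) + A $$ (1,1) = 1" using tA Ac unfolding tr_def by (simp add: lessThan_2)
  also have "B $$ (0,0) + B $$ (1,1) = 1" using tB Bc unfolding tr_def by (simp add: lessThan_2)
  finally show ?thesis by simp
qed

definition kron_mixture :: "nat \<Rightarrow> (nat \<Rightarrow> real) \<Rightarrow> (nat \<Rightarrow> complex mat) \<Rightarrow> (nat \<Rightarrow> complex mat) \<Rightarrow> complex mat" where
  "kron_mixture k q A B = mat 4 4 (\<lambda>(a,b). \<Sum>i<k. complex_of_real (q i) * kron (A i) (B i) $$ (a,b))"

lemma separable_iff_kron_mixture:
  "separable \<sigma> \<longleftrightarrow> (\<exists>k q A B. (\<forall>i<k. 0 \<le> q i \<and> density 2 (A i) \<and> density 2 (B i)) \<and>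
     (\<Sum>i<k. q i) = 1 \<and> \<sigma> = kron_mixture k q A B)"
  unfolding separable_def kron_mixture_def ..

lemma kron_mixture_carrier [simp]: "kron_mixture k q A B \<in> carrier_mat 4 4"
  by (simp add: kron_mixture_def)

lemma kron_mixture_index:
  "a < 4 \<Longrightarrow> b < 4 \<Longrightarrow>
    kron_mixture k q A B $$ (a,b) = (\<Sum>i<k. complex_of_real (q i) * kron (A i) (B i) $$ (a,b))"
  by (simp add: kron_mixture_def)

lemma hermitian_kron_mixture:
  assumes dens: "\<forall>i<k. density 2 (A i) \<and> density 2 (B i)"
  shows "hermitian (kron_mixture k q A B)"
  unfolding hermitian_def
proof (intro conjI)
  show "adj (kron_mixture k q A B) = kron_mixture k q A B"
    using dens by (intro eq_matI) (auto simp: kron_mixture_def cnj_kron_entry)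
qed (simp add: kron_mixture_def)

lemma tr_kron_mixture:
  assumes dens: "\<forall>i<k. density 2 (A i) \<and> density 2 (B i)" and q: "(\<Sum>i<k. q i) = 1"
  shows "tr (kron_mixture k q A B) = 1"
proof -
  have "tr (kron_mixture k q A B) = (\<Sum>i<k. complex_of_real (q i) * (\<Sum>a<4. kron (A i) (B i) $$ (a,a)))"
    unfolding tr_def kron_mixture_def by (simp add: sum_distrib_left sum.swap[of _ "{..<4}"])
  also have "\<dots> = complex_of_real (\<Sum>i<k. q i)"
    using dens kron_diag_sum by (simp add: of_real_sum)
  finally show ?thesis using q by simp
qed

lemma cinner_kron_mixture:
  assumes AB: "\<forall>i<k. A i \<in> carrier_mat 2 2 \<and> B i \<in> carrier_mat 2 2" and x: "x \<in> carrier_vec 4"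
  shows "cinner 4 x (kron_mixture k q A B *\<^sub>v x) = (\<Sum>i<k. complex_of_real (q i) * cinner 4 x (kron (A i) (B i) *\<^sub>v x))"
proof -
  have "cinner 4 x (kron_mixture k q A B *\<^sub>v x)
      = (\<Sum>a<4. \<Sum>b<4. \<Sum>i<k. complex_of_real (q i) * (cnj (x $ a) * kron (A i) (B i) $$ (a,b) * x $ b))"
    unfolding cinner_def
    by (rule sum.cong[OF refl]) (simp add: index_mult_mat_vec_sum[OF kron_mixture_carrier x]
        kron_mixture_index sum_distrib_left sum_distrib_right mult_ac del: index_mult_mat_vec)
  also have "\<dots> = (\<Sum>i<k. \<Sum>a<4. \<Sum>b<4. complex_of_real (q i) * (cnj (x $ a) * kron (A i) (B i) $$ (a,b) * x $ b))"
    by (subst sum.swap, subst (2) sum.swap) (rule refl)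
  also have "\<dots> = (\<Sum>i<k. complex_of_real (q i) * cinner 4 x (kron (A i) (B i) *\<^sub>v x))"
  proof (rule sum.cong[OF refl])
    fix i assume "i \<in> {..<k}"
    hence A: "A i \<in> carrier_mat 2 2" and B: "B i \<in> carrier_mat 2 2" using AB by auto
    show "(\<Sum>a<4. \<Sum>b<4. complex_of_real (q i) * (cnj (x $ a) * kron (A i) (B i) $$ (a,b) * x $ b)) =
      complex_of_real (q i) * cinner 4 x (kron (A i) (B i) *\<^sub>v x)"
      unfolding cinner_kron[OF A B x] by (simp add: sum_distrib_left kron_entry[OF A B])
  qed
  finally show ?thesis .
qed

lemma separable_state_props:
  assumes "separable \<sigma>"
  shows "\<sigma> \<in> carrier_mat 4 4" "hermitian \<sigma>" "\<forall>x\<in>carrier_vec 4. 0 \<le> Re (cinner 4 x (\<sigma> *\<^sub>v x))"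
    "tr \<sigma> = 1" "Re (cinner 4 (bell_vec 4) (\<sigma> *\<^sub>v bell_vec 4)) \<le> 1/2"
proof -
  obtain k q A B where h: "\<forall>i<k. 0 \<le> q i \<and> density 2 (A i) \<and> density 2 (B i)"
    and q: "(\<Sum>i<k. q i) = 1" and \<sigma>: "\<sigma> = kron_mixture k q A B"
    using assms unfolding separable_iff_kron_mixture by blast
  have AB: "\<forall>i<k. A i \<in> carrier_mat 2 2 \<and> B i \<in> carrier_mat 2 2"
    using h density_carrier by blast
  have Re_form: "Re (cinner 4 x (\<sigma> *\<^sub>v x)) = (\<Sum>i<k. q i * Re (cinner 4 x (kron (A i) (B i) *\<^sub>v x)))"
    if "x \<in> carrier_vec 4" for x
    unfolding \<sigma> cinner_kron_mixture[OF AB that] by (simp add: Re_sum)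
  show "\<sigma> \<in> carrier_mat 4 4" unfolding \<sigma> by simp
  show "hermitian \<sigma>" "tr \<sigma> = 1"
    unfolding \<sigma> using h q by (simp_all add: hermitian_kron_mixture tr_kron_mixture)
  show "\<forall>x\<in>carrier_vec 4. 0 \<le> Re (cinner 4 x (\<sigma> *\<^sub>v x))"
  proof
    fix x :: "complex vec" assume x: "x \<in> carrier_vec 4"
    show "0 \<le> Re (cinner 4 x (\<sigma> *\<^sub>v x))"
      unfolding Re_form[OF x] using h cinner_kron_nonneg[OF _ _ x] by (intro sum_nonneg) auto
  qed
  have "Re (cinner 4 (bell_vec 4) (\<sigma> *\<^sub>v bell_vec 4)) \<le> (\<Sum>i<k. q i * (1/2))"
    unfolding Re_form[OF bell_vec_carrier] using h cinner_singlet_kron_le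
    by (intro sum_mono mult_left_mono) auto
  also have "\<dots> = (\<Sum>i<k. q i) * (1/2)" by (rule sum_distrib_right[symmetric])
  finally show "Re (cinner 4 (bell_vec 4) (\<sigma> *\<^sub>v bell_vec 4)) \<le> 1/2" using q by simp
qed

section \<open>The separable part of the Lewenstein-Sanpera decomposition\<close>

definition qubit_proj :: "complex \<Rightarrow> complex \<Rightarrow> complex mat" where
  "qubit_proj a b = mat 2 2 (\<lambda>(i,j). (if i = 0 then a else b) * cnj (if j = 0 then a else b))"

lemma qubit_proj_carrier [simp]: "qubit_proj a b \<in> carrier_mat 2 2"
  by (simp add: qubit_proj_def)

lemma density_qubit_proj:
  assumes n: "(cmod a)\<^sup>2 + (cmod b)\<^sup>2 = 1"
  shows "density 2 (qubit_proj a b)"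
  unfolding density_def psd_def hermitian_def
proof (intro conjI allI)
  show "adj (qubit_proj a b) = qubit_proj a b" by (rule eq_matI) (auto simp: adj_def qubit_proj_def)
  fix v :: "nat \<Rightarrow> complex"
  define c where "c = v 0 * cnj a + v 1 * cnj b"
  have "(\<Sum>i<2. \<Sum>j<2. cnj (v i) * qubit_proj a b $$ (i,j) * v j) = cnj c * c"
    unfolding lessThan_2 c_def by (simp add: qubit_proj_def algebra_simps)
  thus "0 \<le> Re (\<Sum>i<2. \<Sum>j<2. cnj (v i) * qubit_proj a b $$ (i,j) * v j)" by (simp add: Re_cnj_mult_self)
next
  have "tr (qubit_proj a b) = complex_of_real ((cmod a)\<^sup>2 + (cmod b)\<^sup>2)"
    unfolding tr_def by (simp add: lessThan_2 qubit_proj_def complex_norm_square del: of_real_power)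
  thus "tr (qubit_proj a b) = 1" using n by simp
qed (simp_all add: qubit_proj_def)

text \<open>The witness mixes products of opposite-spin eigenstates of sigma_y, sigma_x and sigma_z,
  the three pairs weighted by w 1, w 2 and w 3.\<close>

lemma separable_bell_diag_singlet_half:
  assumes w: "0 \<le> w 1" "0 \<le> w 2" "0 \<le> w 3" and w3: "w 3 = 1/2 - w 1 - w 2" and w4: "w 4 = 1/2"
  shows "separable (bell_diag w)"
proof -
  define q :: "nat \<Rightarrow> real" where "q = (\<lambda>i. if i < 2 then w 1 else if i < 4 then w 2 else w 3)"
  define y_plus where "y_plus = qubit_proj isqrt2 (\<i> * isqrt2)"
  define y_minus where "y_minus = qubit_proj isqrt2 (- \<i> * isqrt2)"
  define x_plus where "x_plus = qubit_proj isqrt2 isqrt2"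
  define x_minus where "x_minus = qubit_proj isqrt2 (- isqrt2)"
  define z_plus where "z_plus = qubit_proj 1 0"
  define z_minus where "z_minus = qubit_proj 0 1"
  define A where "A = (\<lambda>i. [y_plus, y_minus, x_plus, x_minus, z_plus, z_minus] ! i)"
  define B where "B = (\<lambda>i. [y_minus, y_plus, x_minus, x_plus, z_minus, z_plus] ! i)"
  have half: "(cmod isqrt2)\<^sup>2 = 1/2" unfolding isqrt2_def by (simp add: norm_divide power_divide)
  have "density 2 y_plus" "density 2 y_minus" "density 2 x_plus" "density 2 x_minus"
    "density 2 z_plus" "density 2 z_minus"
    unfolding y_plus_def y_minus_def x_plus_def x_minus_def z_plus_def z_minus_def
    by (auto intro!: density_qubit_proj simp: half norm_mult)
  hence c1: "\<forall>i<6. 0 \<le> q i \<and> density 2 (A i) \<and> density 2 (B i)"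
    using w by (auto simp: q_def A_def B_def numeral_eq_Suc less_Suc_eq)
  have c2: "(\<Sum>i<6. q i) = 1" using w3 by (simp add: q_def numeral_eq_Suc)
  have c3: "bell_diag w = kron_mixture 6 q A B"
  proof (rule eq_matI)
    fix a b assume "a < dim_row (kron_mixture 6 q A B)" "b < dim_col (kron_mixture 6 q A B)"
    hence a: "a < 4" and b: "b < 4" by (auto simp: kron_mixture_def)
    have "kron_mixture 6 q A B $$ (a,b) =
      complex_of_real (w 1) * (kron y_plus y_minus $$ (a,b) + kron y_minus y_plus $$ (a,b))
      + complex_of_real (w 2) * (kron x_plus x_minus $$ (a,b) + kron x_minus x_plus $$ (a,b))
      + complex_of_real (w 3) * (kron z_plus z_minus $$ (a,b) + kron z_minus z_plus $$ (a,b))"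
      using a b by (simp add: kron_mixture_def q_def A_def B_def numeral_eq_Suc algebra_simps)
    also have "\<dots> = bell_diag w $$ (a,b)"
      unfolding bell_diag_entry[OF a b] atLeastAtMost_1_4
      using a b unfolding less_4_cases
      by (elim disjE) (simp_all add: w3 w4 kron_entry y_plus_def y_minus_def x_plus_def x_minus_def z_plus_def
          z_minus_def qubit_proj_def bell_values isqrt2_mult_self isqrt2_mult_self_left algebra_simps)
    finally show "bell_diag w $$ (a,b) = kron_mixture 6 q A B $$ (a,b)" by simp
  qed (auto simp: kron_mixture_def)
  show ?thesis unfolding separable_iff_kron_mixture using c1 c2 c3 by blast
qed

definition ls_weights :: "(nat \<Rightarrow> real) \<Rightarrow> nat \<Rightarrow> real" where
  "ls_weights p i = (if i = 4 then 1/2 else p i / (2 * (1 - p 4)))"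

lemma separable_ls_weights:
  assumes nonneg: "\<forall>i\<in>{1..4}. 0 \<le> p i" and sum1: "(\<Sum>i\<in>{1..4}. p i) = 1" and p4: "p 4 < 1"
  shows "separable (bell_diag (ls_weights p))"
proof (rule separable_bell_diag_singlet_half)
  define s where "s = 1 - p 4"
  have s: "s > 0" using p4 by (simp add: s_def)
  show "0 \<le> ls_weights p 1" "0 \<le> ls_weights p 2" "0 \<le> ls_weights p 3"
    using nonneg s by (auto simp: ls_weights_def s_def)
  have "p 3 = s - p 1 - p 2" using sum1 unfolding atLeastAtMost_1_4 s_def by simp
  hence "ls_weights p 3 = (s - p 1 - p 2) / (2 * s)" by (simp add: ls_weights_def s_def)
  also have "\<dots> = 1/2 - p 1 / (2 * s) - p 2 / (2 * s)"
    using s by (simp add: field_simps)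
  finally show "ls_weights p 3 = 1/2 - ls_weights p 1 - ls_weights p 2"
    by (simp add: ls_weights_def s_def)
qed (simp add: ls_weights_def)

lemma ls_weights_pos: "p 4 < 1 \<Longrightarrow> 0 < p i \<Longrightarrow> 0 < ls_weights p i"
  by (simp add: ls_weights_def)

lemma sum_ratio_ls_weights_le:
  fixes p q :: "nat \<Rightarrow> real"
  assumes hp: "\<forall>i\<in>{1..4}. 0 \<le> p i" and sp: "(\<Sum>i\<in>{1..4}. p i) = 1" and p4: "1/2 < p 4" "p 4 < 1"
    and hq: "\<forall>i\<in>{1..4}. 0 \<le> q i" and sq: "(\<Sum>i\<in>{1..4}. q i) = 1" and q4: "q 4 \<le> 1/2"
  shows "(\<Sum>i\<in>{1..4}. p i * q i / ls_weights p i) \<le> 1"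
proof -
  define s where "s = 1 - p 4"
  have s0: "s > 0" using p4 by (simp add: s_def)
  have le: "p i * q i / ls_weights p i \<le> 2 * s * q i" if "i \<in> {1,2,3}" for i
  proof (cases "p i = 0")
    case False
    have lw: "ls_weights p i = p i / (2 * s)" using that by (auto simp: ls_weights_def s_def)
    show ?thesis unfolding lw using False s0 by (simp add: field_simps)
  qed (use that hq s0 in auto)
  have lw4: "ls_weights p 4 = 1/2" by (simp add: ls_weights_def)
  have "(\<Sum>i\<in>{1..4}. p i * q i / ls_weights p i)
      \<le> 2 * s * (q 1 + q 2 + q 3) + 2 * p 4 * q 4"
    using le[of 1] le[of 2] le[of 3] unfolding atLeastAtMost_1_4 by (simp add: lw4 distrib_left)
  also have "\<dots> = 2 * s + 2 * q 4 * (p 4 - s)"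
  proof -
    have q123: "q 1 + q 2 + q 3 = 1 - q 4" using sq unfolding atLeastAtMost_1_4 by simp
    show ?thesis unfolding q123 by (simp add: algebra_simps)
  qed
  also have "\<dots> \<le> 2 * s + 1 * (p 4 - s)"
  proof -
    have "2 * q 4 * (p 4 - s) \<le> 1 * (p 4 - s)"
      by (rule mult_right_mono) (use q4 p4 in \<open>simp_all add: s_def\<close>)
    thus ?thesis by simp
  qed
  also have "\<dots> = 1" by (simp add: s_def)
  finally show ?thesis .
qed

lemma tr_bell_diag_ln_separable_le:
  assumes nonneg: "\<forall>i\<in>{1..4}. 0 \<le> p i" and sum1: "(\<Sum>i\<in>{1..4}. p i) = 1"
    and p4: "1/2 < p 4" "p 4 < 1" and sep: "separable \<sigma>"
    and supp: "\<forall>v\<in>carrier_vec 4. \<sigma> *\<^sub>v v = 0\<^sub>v 4 \<longrightarrow> bell_diag p *\<^sub>v v = 0\<^sub>v 4"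
  shows "Re (tr (bell_diag p * mat_fun ln \<sigma>)) \<le> (\<Sum>i\<in>{1..4}. p i * ln (ls_weights p i))"
proof -
  note \<sigma> = separable_state_props[OF sep]
  define q where "q i = Re (cinner 4 (bell_vec i) (\<sigma> *\<^sub>v bell_vec i))" for i
  define r where "r = ls_weights p"
  have dim: "dim_row \<sigma> = 4" using \<sigma>(1) by simp
  have M: "mat_fun ln \<sigma> \<in> carrier_mat 4 4" using mat_fun_carrier[OF \<sigma>(2)] dim by simp
  have per_state: "p i * Re (cinner 4 (bell_vec i) (mat_fun ln \<sigma> *\<^sub>v bell_vec i))
      \<le> p i * (ln (r i) + q i / r i - 1)" if i: "i \<in> {1..4}" for i
  proof (cases "p i = 0")
    case False
    have ker: "\<forall>y\<in>carrier_vec 4. \<sigma> *\<^sub>v y = 0\<^sub>v 4 \<longrightarrow> cinner 4 (bell_vec i) y = 0"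
      using supp bell_diag_kernel_iff False i by blast
    have "0 < r i" using ls_weights_pos[of p, OF p4(2)] nonneg i False unfolding r_def by force
    hence "Re (cinner 4 (bell_vec i) (mat_fun ln \<sigma> *\<^sub>v bell_vec i)) \<le> ln (r i) + q i / r i - 1"
      unfolding q_def using cinner_bell_vec_bell_vec[OF i i]
      by (intro mat_fun_ln_form_le[OF \<sigma>(2) dim \<sigma>(3) bell_vec_carrier _ ker]) simp_all
    thus ?thesis using nonneg i by (intro mult_left_mono) auto
  qed simp
  have q_nonneg: "\<forall>i\<in>{1..4}. 0 \<le> q i" using \<sigma>(3) by (simp add: q_def)
  have "(\<Sum>i\<in>{1..4}. q i) = Re (\<Sum>i\<in>{1..4}. cinner 4 (bell_vec i) (\<sigma> *\<^sub>v bell_vec i))"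
    by (simp add: q_def Re_sum)
  also have "\<dots> = 1" using tr_eq_sum_bell[OF \<sigma>(1)] \<sigma>(4) by simp
  finally have "(\<Sum>i\<in>{1..4}. q i) = 1" .
  hence ratio: "(\<Sum>i\<in>{1..4}. p i * q i / r i) \<le> 1"
    unfolding r_def using \<sigma>(5) q_nonneg
    by (intro sum_ratio_ls_weights_le[OF nonneg sum1 p4]) (simp_all add: q_def)
  have "Re (tr (bell_diag p * mat_fun ln \<sigma>)) = (\<Sum>i\<in>{1..4}. p i * Re (cinner 4 (bell_vec i) (mat_fun ln \<sigma> *\<^sub>v bell_vec i)))"
    unfolding tr_bell_diag_mult[OF M] by (simp add: Re_sum)
  also have "\<dots> \<le> (\<Sum>i\<in>{1..4}. p i * (ln (r i) + q i / r i - 1))"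
    by (rule sum_mono) (rule per_state)
  also have "\<dots> = (\<Sum>i\<in>{1..4}. p i * ln (r i)) + ((\<Sum>i\<in>{1..4}. p i * q i / r i) - 1)"
    using sum1 by (simp add: algebra_simps sum.distrib sum_subtractf)
  also have "\<dots> \<le> (\<Sum>i\<in>{1..4}. p i * ln (r i))" using ratio by simp
  finally show ?thesis unfolding r_def .
qed

lemma rel_entropy_ls_weights_le:
  assumes nonneg: "\<forall>i\<in>{1..4}. 0 \<le> p i" and sum1: "(\<Sum>i\<in>{1..4}. p i) = 1"
    and p4: "1/2 < p 4" "p 4 < 1" and sep: "separable \<sigma>"
  shows "rel_entropy (bell_diag p) (bell_diag (ls_weights p)) \<le> rel_entropy (bell_diag p) \<sigma>"
proof (cases "\<forall>v\<in>carrier_vec 4. \<sigma> *\<^sub>v v = 0\<^sub>v 4 \<longrightarrow> bell_diag p *\<^sub>v v = 0\<^sub>v 4")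
  case True
  have "ls_weights p i \<noteq> 0" if "i \<in> {1..4}" "p i \<noteq> 0" for i
    using ls_weights_pos[of p, OF p4(2)] nonneg that by (simp add: order.strict_iff_order)
  hence "\<forall>v\<in>carrier_vec 4. bell_diag (ls_weights p) *\<^sub>v v = 0\<^sub>v 4 \<longrightarrow> bell_diag p *\<^sub>v v = 0\<^sub>v 4"
    by (simp add: bell_diag_kernel_iff)
  hence "rel_entropy (bell_diag p) (bell_diag (ls_weights p)) = ereal
      (Re (tr (bell_diag p * mat_fun ln (bell_diag p))) - (\<Sum>i\<in>{1..4}. p i * ln (ls_weights p i)))"
    using rel_entropy_eq_ereal[OF hermitian_bell_diag _ hermitian_bell_diag]
    by (simp add: tr_bell_diag_mat_fun_ln)
  moreover have "rel_entropy (bell_diag p) \<sigma> = ereal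
      (Re (tr (bell_diag p * mat_fun ln (bell_diag p))) - Re (tr (bell_diag p * mat_fun ln \<sigma>)))"
    using rel_entropy_eq_ereal[OF hermitian_bell_diag _ separable_state_props(2)[OF sep]] True
      separable_state_props(1)[OF sep] by simp
  ultimately show ?thesis using tr_bell_diag_ln_separable_le[OF nonneg sum1 p4 sep True] by simp
next
  case False
  hence "rel_entropy (bell_diag p) \<sigma> = \<infinity>"
    using separable_state_props(1)[OF sep] unfolding rel_entropy_def by auto
  thus ?thesis by simp
qed

theorem mainTheorem3:
  fixes p :: "nat \<Rightarrow> real"
  assumes nonneg: "\<forall>i\<in>{1..4}. 0 \<le> p i"
    and sum1: "(\<Sum>i\<in>{1..4}. p i) = 1"
    and p4_gt: "p 4 > 1/2"
    and p4_lt: "p 4 < 1"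
  shows "separable (bell_diag (\<lambda>i. if i = 4 then 1/2 else p i / (2 * (1 - p 4)))) \<and>
    (\<forall>\<sigma>. separable \<sigma> \<longrightarrow>
       rel_entropy (bell_diag p) (bell_diag (\<lambda>i. if i = 4 then 1/2 else p i / (2 * (1 - p 4))))
       \<le> rel_entropy (bell_diag p) \<sigma>)"
proof -
  have "(\<lambda>i. if i = 4 then 1/2 else p i / (2 * (1 - p 4))) = ls_weights p"
    by (simp add: fun_eq_iff ls_weights_def)
  thus ?thesis using separable_ls_weights[OF nonneg sum1 p4_lt]
      rel_entropy_ls_weights_le[OF nonneg sum1 p4_gt p4_lt] by auto
qed

end
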